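(* Let $n\ge 2$, let $k\neq 0$ be an integer, and let $x\in\mathcal{O}_n$ satisfy $\omega_t(x)=t^kx$ for all $t\in\mathbb{T}$. If $x$ is normal, then $x=0$.
   Context: $\mathcal{O}_n=C^*(s_1,\dots,s_n)$ is the Cuntz algebra, generated by isometries $s_1,\dots,s_n$ with $\sum_{i=1}^n s_is_i^*=1$, and $\omega$ is the standard circle action, $\omega_t(s_i)=ts_i$, $t\in\mathbb{T}$. *)

theory Defs
  imports "HOL-Analysis.Analysis"
begin

text \<open>A unital C*-algebra: a real Banach algebra with unit on the type 'a, together with
  a complex scalar multiplication sc extending the real one and an involution st
  satisfying the C*-identity.\<close>

definition cstar_algebra ::
  "(complex \<Rightarrow> 'a::{real_normed_algebra_1,banach} \<Rightarrow> 'a) \<Rightarrow> ('a \<Rightarrow> 'a) \<Rightarrow> bool" where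
  "cstar_algebra sc st \<longleftrightarrow>
     (\<forall>r x. sc (complex_of_real r) x = r *\<^sub>R x) \<and>
     (\<forall>a b x. sc (a + b) x = sc a x + sc b x) \<and>
     (\<forall>a x y. sc a (x + y) = sc a x + sc a y) \<and>
     (\<forall>a b x. sc a (sc b x) = sc (a * b) x) \<and>
     (\<forall>a x y. sc a (x * y) = sc a x * y \<and> sc a (x * y) = x * sc a y) \<and>
     (\<forall>a x. norm (sc a x) = cmod a * norm x) \<and>
     (\<forall>x. st (st x) = x) \<and>
     (\<forall>x y. st (x + y) = st x + st y) \<and>
     (\<forall>a x. st (sc a x) = sc (cnj a) (st x)) \<and>
     (\<forall>x y. st (x * y) = st y * st x) \<and>
     (\<forall>x. norm (st x * x) = (norm x)\<^sup>2)"

definition cstar_gen ::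
  "(complex \<Rightarrow> 'a::{real_normed_algebra_1,banach} \<Rightarrow> 'a) \<Rightarrow> ('a \<Rightarrow> 'a) \<Rightarrow> 'a set \<Rightarrow> 'a set" where
  "cstar_gen sc st S = \<Inter> {B. S \<subseteq> B \<and> 1 \<in> B \<and> closed B \<and>
      (\<forall>x\<in>B. \<forall>y\<in>B. x + y \<in> B \<and> x * y \<in> B) \<and>
      (\<forall>c. \<forall>x\<in>B. sc c x \<in> B) \<and> (\<forall>x\<in>B. st x \<in> B)}"

definition star_hom ::
  "(complex \<Rightarrow> 'a::{real_normed_algebra_1,banach} \<Rightarrow> 'a) \<Rightarrow> ('a \<Rightarrow> 'a) \<Rightarrow> ('a \<Rightarrow> 'a) \<Rightarrow> bool" where
  "star_hom sc st f \<longleftrightarrow>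
     (\<forall>x y. f (x + y) = f x + f y) \<and> (\<forall>x y. f (x * y) = f x * f y) \<and>
     (\<forall>c x. f (sc c x) = sc c (f x)) \<and> (\<forall>x. f (st x) = st (f x)) \<and> f 1 = 1"

end

theory Submission
  imports Defs
begin

text \<open>The averaging maps \<open>Phi m x = n\<^sup>-\<^sup>m \<Sum>\<^bsub>|\<alpha>| = m\<^esub> s\<^sub>\<alpha>\<^sup>* x s\<^sub>\<alpha>\<close> converge to
  scalars on the elements that matter here; their limit \<open>tau\<close> plays the role of the canonical
  state of \<open>\<O>\<^sub>n\<close>. If \<open>b\<close> has finite level, i.e. maps words of length \<open>L\<close> into the span of words
  of length \<open>M\<close>, then \<open>tau (b\<^sup>* b)\<close> is its Hilbert--Schmidt norm divided by \<open>n\<^sup>L\<close>, and \<open>b\<^sup>*\<close> has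
  the same Hilbert--Schmidt norm. Hence an element \<open>x\<close> of degree \<open>k > 0\<close>, a limit of elements of
  level shift \<open>k\<close>, satisfies \<open>tau (x x\<^sup>*) = n\<^sup>-\<^sup>k tau (x\<^sup>* x)\<close>, and normality forces
  \<open>tau (x x\<^sup>*) = 0\<close>. This makes \<open>x = 0\<close>: approximate \<open>x\<close> by \<open>q\<close> of finite level, choose a unit
  vector \<open>v\<close> of level \<open>L\<close> with \<open>c = \<parallel>q v\<parallel> \<approx> \<parallel>q\<parallel>\<close> and put \<open>u = q v / c\<close>; then \<open>u\<^sup>* x v\<close> is
  close to the scalar \<open>c\<close>, while \<open>tau\<close> of its square modulus is dominated by \<open>tau (x x\<^sup>*) = 0\<close>.
  Negative \<open>k\<close> is reduced to positive \<open>k\<close> through \<open>x\<^sup>*\<close>.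

  The analytic input is that the norm of a self-adjoint element is its spectral radius, which
  follows from Rickart's averaging argument. It makes *-homomorphisms, in particular the gauge
  automorphisms, contractive (needed to project onto degree \<open>k\<close>), and it makes projections
  summing to \<open>1\<close> orthogonal, so that \<open>s\<^sub>i\<^sup>* s\<^sub>j = 0\<close> for \<open>i \<noteq> j\<close>.\<close>

section \<open>Neumann series and roots of unity\<close>

lemma left_inverse_eq_right_inverse:
  fixes x y z :: "'b::ring_1"
  assumes "y * x = 1" "x * z = 1"
  shows "y = z"
proof -
  have "y = y * (x * z)" using assms by simp
  also have "\<dots> = (y * x) * z" by (simp add: mult.assoc)
  finally show ?thesis using assms by simp
qed

lemma commute_with_inverse:
  fixes x w a :: "'b::ring_1"
  assumes "w * x = 1" "x * w = 1" "a * x = x * a"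
  shows "a * w = w * a"
proof -
  have "a * w = w * x * a * w" using assms by simp
  also have "\<dots> = w * (x * a) * w" by (simp add: mult.assoc)
  also have "\<dots> = w * (a * x) * w" using assms by simp
  also have "\<dots> = w * a * (x * w)" by (simp add: mult.assoc)
  finally show ?thesis using assms by simp
qed

lemma norm_mult3_le:
  fixes a b c :: "'b::real_normed_algebra"
  shows "norm (a * b * c) \<le> norm a * norm b * norm c"
  by (rule order_trans[OF norm_mult_ineq mult_right_mono[OF norm_mult_ineq norm_ge_zero]])

lemma one_minus_power_factor:
  fixes y :: "'b::ring_1"
  shows "(1 - y) * (\<Sum>i<N. y ^ i) = 1 - y ^ N"
proof (induction N)
  case (Suc N)
  have "(1 - y) * (\<Sum>i<Suc N. y ^ i) = (1 - y) * (\<Sum>i<N. y ^ i) + (1 - y) * y ^ N"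
    by (simp add: distrib_left)
  also have "\<dots> = 1 - y ^ Suc N" unfolding Suc.IH by (simp add: algebra_simps)
  finally show ?case .
qed simp

lemma sum_roots_of_unity_powi:
  assumes N: "N > 0" and nd: "\<not> int N dvd r"
  shows "(\<Sum>j<N. (cis (2*pi/N) powi r) ^ j) = 0"
proof -
  define w where "w = cis (2*pi/N) powi r"
  have w: "w = cis (of_int r * (2*pi/N))" unfolding w_def by (rule cis_power_int)
  have "w ^ N = cis (real N * (of_int r * (2*pi/N)))" unfolding w by (rule Complex.DeMoivre)
  also have "real N * (of_int r * (2*pi/N)) = 2 * pi * of_int r" using N by (simp add: field_simps)
  finally have wN: "w ^ N = 1" by (simp add: cis_multiple_2pi)
  have "w \<noteq> 1"
  proof
    assume "w = 1"
    hence "cos (of_int r * (2*pi/N)) = 1" unfolding w using cis.sel(1)[of "of_int r * (2*pi/N)"]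
      by simp
    then obtain m :: int where "of_int r * (2*pi/N) = of_int m * 2 * pi" using cos_one_2pi_int
      by blast
    hence "real_of_int r = real_of_int m * real N" using N pi_gt_zero by (simp add: field_simps)
    hence "r = m * int N" by (metis of_int_eq_iff of_int_mult of_int_of_nat_eq)
    thus False using nd by simp
  qed
  hence "(\<Sum>j<N. w ^ j) = (w ^ N - 1) / (w - 1)" by (rule geometric_sum)
  thus ?thesis unfolding w_def[symmetric] using wN by simp
qed

lemma cnj_unit: "cmod t = 1 \<Longrightarrow> cnj t = inverse t"
  using complex_div_cnj[of 1 t] by (simp add: divide_inverse)

lemma cmod_root_power: "cmod (cis (2*pi/m) ^ j) = 1"
  by (simp add: norm_power)

definition invertible_el :: "'b::ring_1 \<Rightarrow> bool" where
  "invertible_el x \<longleftrightarrow> (\<exists>y. y * x = 1 \<and> x * y = 1)"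

lemma neumann_series:
  fixes u :: "'b::{real_normed_algebra_1,banach}"
  assumes u: "norm u < 1"
  obtains w where "w * (1 - u) = 1" "(1 - u) * w = 1" "norm w \<le> 1 / (1 - norm u)"
    "norm (w - 1) \<le> norm u / (1 - norm u)"
proof -
  have g: "summable (\<lambda>i. norm u ^ i)" using u by (simp add: summable_geometric)
  have "summable (\<lambda>i. norm (u ^ i))"
    by (rule summable_comparison_test[OF _ g]) (auto intro: norm_power_ineq)
  hence S: "summable (\<lambda>i. u ^ i)" by (rule summable_norm_cancel)
  define w where "w = (\<Sum>i. u ^ i)"
  have "u * w = (\<Sum>i. u ^ Suc i)" unfolding w_def using suminf_mult[OF S] by simp
  also have "\<dots> = w - 1" unfolding w_def using suminf_split_head[OF S] by simp
  finally have uw: "u * w = w - 1" .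
  have "w * u = (\<Sum>i. u ^ i * u)" unfolding w_def using suminf_mult2[OF S] by simp
  also have "\<dots> = (\<Sum>i. u ^ Suc i)" by (metis power_Suc power_Suc2)
  also have "\<dots> = w - 1" unfolding w_def using suminf_split_head[OF S] by simp
  finally have wu: "w * u = w - 1" .
  have "norm w \<le> (\<Sum>i. norm u ^ i)" unfolding w_def
    by (rule norm_suminf_le[OF _ g]) (rule norm_power_ineq)
  also have "\<dots> = 1 / (1 - norm u)" using u by (simp add: suminf_geometric)
  finally have nw: "norm w \<le> 1 / (1 - norm u)" .
  have "norm (w - 1) = norm (u * w)" using uw by simp
  also have "\<dots> \<le> norm u * norm w" by (rule norm_mult_ineq)
  also have "\<dots> \<le> norm u * (1 / (1 - norm u))" by (rule mult_left_mono[OF nw]) simp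
  finally have "norm (w - 1) \<le> norm u / (1 - norm u)" by simp
  with uw wu nw show thesis by (intro that) (auto simp: algebra_simps)
qed

lemma invertible_el_one_minus:
  "norm (u::'b::{real_normed_algebra_1,banach}) < 1 \<Longrightarrow> invertible_el (1 - u)"
  unfolding invertible_el_def by (metis neumann_series)

lemma one_sided_inverse_near_one:
  fixes a b :: "'b::{real_normed_algebra_1,banach}"
  assumes a: "norm (1 - a) < 1" and ab: "b * a = 1 \<or> a * b = 1"
  shows "norm (b - 1) \<le> norm (1 - a) / (1 - norm (1 - a))"
proof -
  obtain w where w: "w * a = 1" "a * w = 1" "norm (w - 1) \<le> norm (1 - a) / (1 - norm (1 - a))"
    using neumann_series[OF a] by auto
  from ab have "b = w"
    using left_inverse_eq_right_inverse[of b a w] left_inverse_eq_right_inverse[of w a b] w(1,2)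
      by auto
  with w(3) show ?thesis by simp
qed

lemma complex_eq_0_of_cmod_one_pm:
  fixes x :: complex
  assumes "cmod (1 + x) \<le> 1" "cmod (1 - x) \<le> 1"
  shows "x = 0"
proof -
  have "(cmod (1 + x))\<^sup>2 \<le> 1" "(cmod (1 - x))\<^sup>2 \<le> 1"
    using assms by (auto simp: power_le_one)
  hence "(1 + Re x)\<^sup>2 + (Im x)\<^sup>2 \<le> 1" "(1 - Re x)\<^sup>2 + (Im x)\<^sup>2 \<le> 1"
    by (simp_all add: cmod_power2)
  hence "(Re x)\<^sup>2 + (Im x)\<^sup>2 \<le> 0" by (simp add: power2_eq_square algebra_simps)
  hence "(Re x)\<^sup>2 = 0" "(Im x)\<^sup>2 = 0"
    using zero_le_power2[of "Re x"] zero_le_power2[of "Im x"] by linarith+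
  thus ?thesis by (simp add: complex_eq_iff)
qed

section \<open>C*-algebras\<close>

locale cstar_alg =
  fixes sc :: "complex \<Rightarrow> 'a::{real_normed_algebra_1,banach} \<Rightarrow> 'a" and st :: "'a \<Rightarrow> 'a"
  assumes cstar: "cstar_algebra sc st"
begin

lemma sc_of_real: "sc (complex_of_real r) x = r *\<^sub>R x"
  using cstar unfolding cstar_algebra_def by simp
lemma sc_add_left: "sc (a + b) x = sc a x + sc b x"
  using cstar unfolding cstar_algebra_def by simp
lemma sc_add_right: "sc a (x + y) = sc a x + sc a y"
  using cstar unfolding cstar_algebra_def by simp
lemma sc_sc: "sc a (sc b x) = sc (a * b) x"
  using cstar unfolding cstar_algebra_def by simp
lemma sc_mult_left: "sc a x * y = sc a (x * y)"
  using cstar unfolding cstar_algebra_def by metis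
lemma sc_mult_right: "x * sc a y = sc a (x * y)"
  using cstar unfolding cstar_algebra_def by metis
lemma norm_sc: "norm (sc a x) = cmod a * norm x"
  using cstar unfolding cstar_algebra_def by simp
lemma st_st [simp]: "st (st x) = x"
  using cstar unfolding cstar_algebra_def by simp
lemma st_add: "st (x + y) = st x + st y"
  using cstar unfolding cstar_algebra_def by simp
lemma st_sc: "st (sc a x) = sc (cnj a) (st x)"
  using cstar unfolding cstar_algebra_def by simp
lemma st_mult: "st (x * y) = st y * st x"
  using cstar unfolding cstar_algebra_def by simp
lemma cstar_id: "norm (st x * x) = (norm x)\<^sup>2"
  using cstar unfolding cstar_algebra_def by simp

lemma sc_one [simp]: "sc 1 x = x"
  using sc_of_real[of 1 x] by simp
lemma sc_zero_left [simp]: "sc 0 x = 0"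
  using sc_of_real[of 0 x] by simp
lemma sc_zero_right [simp]: "sc a 0 = 0"
  using sc_add_right[of a 0 0] by simp
lemma sc_minus_right: "sc a (- x) = - sc a x"
  using minus_unique[of "sc a x" "sc a (-x)"] sc_add_right[of a x "-x"] by simp
lemma sc_diff_right: "sc a (x - y) = sc a x - sc a y"
  using sc_add_right[of a x "-y"] sc_minus_right by simp
lemma sc_minus_left: "sc (- a) x = - sc a x"
  using minus_unique[of "sc a x" "sc (-a) x"] sc_add_left[of a "-a" x] by simp
lemma sc_diff_left: "sc (a - b) x = sc a x - sc b x"
  using sc_add_left[of a "-b" x] sc_minus_left by simp
lemma sc_sum_right: "sc a (sum f A) = (\<Sum>i\<in>A. sc a (f i))"
  by (induction A rule: infinite_finite_induct) (auto simp: sc_add_right)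
lemma sc_sum_left: "sc (sum f A) x = (\<Sum>i\<in>A. sc (f i) x)"
  by (induction A rule: infinite_finite_induct) (auto simp: sc_add_left)
lemma sc_of_nat: "sc (of_nat m) x = of_nat m * x"
  using sc_of_real[of "real m" x] by (simp add: scaleR_conv_of_real)
lemma sc_mult_sc: "sc a x * sc b y = sc (a * b) (x * y)"
  by (simp add: sc_mult_left sc_mult_right sc_sc mult.commute)
lemma sc_power: "(sc a x) ^ m = sc (a ^ m) (x ^ m)"
  by (induction m) (auto simp: sc_mult_sc mult.commute)
lemma norm_sc_one [simp]: "norm (sc a 1) = cmod a"
  by (simp add: norm_sc)
lemma sc_one_inj: "sc c 1 = sc d 1 \<Longrightarrow> c = d"
  using norm_sc_one[of "c - d"] by (simp add: sc_diff_left)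

lemma st_zero [simp]: "st 0 = 0"
  using st_add[of 0 0] by simp
lemma st_one [simp]: "st 1 = 1"
  by (metis mult_1_right st_mult st_st)
lemma st_minus: "st (- x) = - st x"
  using minus_unique[of "st x" "st (-x)"] st_add[of x "-x"] by simp
lemma st_diff: "st (x - y) = st x - st y"
  using st_add[of x "-y"] st_minus by simp
lemma st_sum: "st (sum f A) = (\<Sum>i\<in>A. st (f i))"
  by (induction A rule: infinite_finite_induct) (auto simp: st_add)
lemma st_power: "st (x ^ m) = (st x) ^ m"
  by (induction m) (auto simp: st_mult power_commutes)

lemma norm_st [simp]: "norm (st x) = norm x"
proof -
  have le: "norm y \<le> norm (st y)" for y
  proof (cases "y = 0")
    case False
    have "norm y * norm y = norm (st y * y)" by (simp add: cstar_id power2_eq_square)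
    also have "\<dots> \<le> norm (st y) * norm y" by (rule norm_mult_ineq)
    finally show ?thesis using False by simp
  qed simp
  show ?thesis using le[of x] le[of "st x"] by simp
qed

lemma bounded_linear_sc: "bounded_linear (sc c)"
proof
  show "sc c (x + y) = sc c x + sc c y" for x y by (rule sc_add_right)
  show "sc c (r *\<^sub>R x) = r *\<^sub>R sc c x" for r x
    by (simp add: sc_of_real[symmetric] sc_sc mult.commute)
  show "\<exists>K. \<forall>x. norm (sc c x) \<le> norm x * K"
    by (intro exI[of _ "cmod c"]) (simp add: norm_sc mult.commute)
qed

lemma bounded_linear_st: "bounded_linear st"
proof
  show "st (x + y) = st x + st y" for x y by (rule st_add)
  show "st (r *\<^sub>R x) = r *\<^sub>R st x" for r x by (simp add: sc_of_real[symmetric] st_sc)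
  show "\<exists>K. \<forall>x. norm (st x) \<le> norm x * K" by (intro exI[of _ 1]) simp
qed

lemma norm_selfadj_power2: "st h = h \<Longrightarrow> norm (h ^ (2 ^ j)) = norm h ^ (2 ^ j)"
proof (induction j)
  case (Suc j)
  have "h ^ (2 ^ Suc j) = st (h ^ (2 ^ j)) * h ^ (2 ^ j)"
    using Suc.prems by (simp add: st_power power_add[symmetric] mult_2)
  hence "norm (h ^ (2 ^ Suc j)) = (norm (h ^ (2 ^ j)))\<^sup>2" by (simp add: cstar_id)
  also have "\<dots> = norm h ^ (2 ^ Suc j)" using Suc by (simp add: power_mult[symmetric] mult.commute)
  finally show ?case .
qed simp

lemma invertible_el_sc: "c \<noteq> 0 \<Longrightarrow> invertible_el x \<Longrightarrow> invertible_el (sc c x)"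
  unfolding invertible_el_def
proof (elim exE conjE)
  fix y assume c: "c \<noteq> 0" and y: "y * x = 1" "x * y = 1"
  have "sc (inverse c) y * sc c x = 1" "sc c x * sc (inverse c) y = 1"
    using y c by (simp_all add: sc_mult_sc)
  thus "\<exists>z. z * sc c x = 1 \<and> sc c x * z = 1" by blast
qed

section \<open>Rickart's spectral radius argument\<close>

lemma resolvent_norm_le_double:
  fixes F :: "complex \<Rightarrow> 'a"
  assumes g: "norm g \<le> 1"
    and Fm: "F m * (1 - sc m g) = 1" and Fl: "(1 - sc l g) * F l = 1"
    and d: "cmod (l - m) * (norm (F m) + 1) \<le> 1/2"
  shows "norm (F l) \<le> 2 * norm (F m)"
proof -
  define u where "u = sc (l - m) (F m * g)"
  have "norm u \<le> cmod (l - m) * (norm (F m) * norm g)"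
    unfolding u_def norm_sc by (intro mult_left_mono norm_mult_ineq) auto
  also have "\<dots> \<le> cmod (l - m) * (norm (F m) + 1)"
    using g mult_left_le[of "norm g" "norm (F m)"] by (intro mult_left_mono) auto
  finally have nu: "norm u \<le> 1/2" using d by simp
  then obtain w where w: "w * (1 - u) = 1" "norm w \<le> 1 / (1 - norm u)"
    using neumann_series[of u] by auto
  have "1 / (1 - norm u) \<le> 2" using nu by (simp add: field_simps)
  hence nw: "norm w \<le> 2" using w(2) by linarith
  have "F m * (1 - sc l g) = F m * (1 - sc m g) - F m * sc (l - m) g"
    by (simp add: algebra_simps sc_diff_left)
  also have "\<dots> = 1 - u" using Fm by (simp add: u_def sc_mult_right)
  finally have "(w * F m) * (1 - sc l g) = 1" using w(1) by (simp add: mult.assoc)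
  hence "w * F m = F l" using Fl by (rule left_inverse_eq_right_inverse)
  hence "norm (F l) \<le> norm w * norm (F m)" by (metis norm_mult_ineq)
  also have "\<dots> \<le> 2 * norm (F m)" by (rule mult_right_mono[OF nw]) simp
  finally show ?thesis .
qed

lemma resolvent_bounded:
  fixes F :: "complex \<Rightarrow> 'a"
  assumes g: "norm g \<le> 1"
    and Finv: "\<And>l. cmod l \<le> \<rho> \<Longrightarrow> F l * (1 - sc l g) = 1 \<and> (1 - sc l g) * F l = 1"
  obtains M where "\<And>l. cmod l \<le> \<rho> \<Longrightarrow> norm (F l) \<le> M"
proof -
  define r where "r m = 1 / (2 * (norm (F m) + 1))" for m
  have rpos: "r m > 0" for m
    unfolding r_def by (simp add: add_nonneg_pos)
  obtain C where C: "C \<subseteq> cball 0 \<rho>" "finite C" "cball 0 \<rho> \<subseteq> (\<Union>m\<in>C. ball m (r m))"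
  proof (rule compactE_image[OF compact_cball])
    show "cball 0 \<rho> \<subseteq> (\<Union>m\<in>cball 0 \<rho>. ball m (r m))" using rpos by force
  qed auto
  have "norm (F l) \<le> (\<Sum>m\<in>C. 2 * norm (F m))" if l: "cmod l \<le> \<rho>" for l
  proof -
    from l C(3) obtain m where m: "m \<in> C" "l \<in> ball m (r m)" by (auto simp: dist_norm)
    have "cmod (l - m) * (norm (F m) + 1) \<le> r m * (norm (F m) + 1)"
      using m(2) by (intro mult_right_mono) (auto simp: dist_norm norm_minus_commute)
    also have "\<dots> = 1/2"
      unfolding r_def using norm_ge_zero[of "F m"] by (simp add: add_nonneg_eq_0_iff)
    moreover have "cmod m \<le> \<rho>" using m(1) C(1) by auto
    ultimately have "norm (F l) \<le> 2 * norm (F m)"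
      using Finv[of m] Finv[OF l] by (intro resolvent_norm_le_double[OF g]) auto
    also have "\<dots> \<le> (\<Sum>m\<in>C. 2 * norm (F m))" by (rule member_le_sum[OF m(1)]) (auto simp: C(2))
    finally show ?thesis .
  qed
  thus thesis by (rule that)
qed

lemma resolvent_diff:
  assumes Fl: "F l * (1 - sc l g) = 1" and Fm: "(1 - sc m g) * F m = 1"
  shows "F l - F m = sc (l - m) (F l * g * F m)"
proof -
  have "F l - F m = F l * ((1 - sc m g) * F m) - (F l * (1 - sc l g)) * F m"
    using Fl Fm by simp
  also have "\<dots> = F l * ((1 - sc m g) - (1 - sc l g)) * F m" by (simp add: algebra_simps)
  also have "(1 - sc m g) - (1 - sc l g) = sc (l - m) g" by (simp add: sc_diff_left)
  finally show ?thesis by (simp add: sc_mult_left sc_mult_right mult.assoc)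
qed

lemma resolvent_lipschitz:
  assumes g: "norm g \<le> 1" and Fl: "F l * (1 - sc l g) = 1" and Fm: "(1 - sc m g) * F m = 1"
    and M: "norm (F l) \<le> M" "norm (F m) \<le> M"
  shows "norm (F l - F m) \<le> cmod (l - m) * M\<^sup>2"
proof -
  have "norm (F l * g * F m) \<le> norm (F l) * norm g * norm (F m)" by (rule norm_mult3_le)
  also have "\<dots> \<le> M * 1 * M"
    using g M order_trans[OF norm_ge_zero M(1)] by (intro mult_mono) auto
  finally have "cmod (l - m) * norm (F l * g * F m) \<le> cmod (l - m) * M\<^sup>2"
    by (intro mult_left_mono) (auto simp: power2_eq_square)
  thus ?thesis using resolvent_diff[OF Fl Fm] by (simp add: norm_sc)
qed

definition root_avg :: "(complex \<Rightarrow> 'a) \<Rightarrow> nat \<Rightarrow> complex \<Rightarrow> 'a" where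
  "root_avg F N l = sc (1 / of_nat N) (\<Sum>j<N. F (cis (2*pi/N) ^ j * l))"

lemma norm_root_avg_diff_le:
  assumes "\<And>j. norm (F (cis (2*pi/N) ^ j * l) - F (cis (2*pi/N) ^ j * m)) \<le> B" and "N > 0"
  shows "norm (root_avg F N l - root_avg F N m) \<le> B"
proof -
  have "norm (\<Sum>j<N. F (cis (2*pi/N) ^ j * l) - F (cis (2*pi/N) ^ j * m)) \<le> real N * B"
    using sum_norm_le[of "{..<N}" "\<lambda>j. F (cis (2*pi/N) ^ j * l) - F (cis (2*pi/N) ^ j * m)" "\<lambda>_. B"]
      assms(1) by simp
  thus ?thesis unfolding root_avg_def using assms(2)
    by (simp add: sc_diff_right[symmetric] sum_subtractf norm_sc norm_divide field_simps)
qed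

text \<open>For every root \<open>c = \<zeta>\<^sup>j l\<close> we have \<open>1 - l\<^sup>N g\<^sup>N = (1 - c g) \<Sum>\<^bsub>i<N\<^esub> (c g)\<^sup>i\<close>; averaging over \<open>j\<close>
  kills the terms with \<open>0 < i < N\<close>.\<close>

lemma root_avg_resolvent:
  fixes F :: "complex \<Rightarrow> 'a"
  assumes N: "N > 0"
    and Finv: "\<And>j. j < N \<Longrightarrow> F (cis (2*pi/N) ^ j * l) * (1 - sc (cis (2*pi/N) ^ j * l) g) = 1"
  shows "root_avg F N l * (1 - sc (l ^ N) (g ^ N)) = 1"
proof -
  define z where "z = cis (2*pi/N)"
  have zN: "z ^ N = 1" unfolding z_def using N by (simp add: Complex.DeMoivre)
  have one: "F (z ^ j * l) * (1 - sc (l ^ N) (g ^ N)) = (\<Sum>i<N. sc ((z ^ j * l) ^ i) (g ^ i))"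
    if j: "j < N" for j
  proof -
    define c where "c = z ^ j * l"
    have "c ^ N = l ^ N" unfolding c_def
      by (simp add: power_mult_distrib power_mult[symmetric] mult.commute[of j N] power_mult zN)
    hence "1 - sc (l ^ N) (g ^ N) = 1 - (sc c g) ^ N" by (simp add: sc_power)
    also have "\<dots> = (1 - sc c g) * (\<Sum>i<N. (sc c g) ^ i)" by (rule one_minus_power_factor[symmetric])
    finally have "F c * (1 - sc (l ^ N) (g ^ N)) = (F c * (1 - sc c g)) * (\<Sum>i<N. (sc c g) ^ i)"
      by (simp add: mult.assoc)
    also have "\<dots> = (\<Sum>i<N. (sc c g) ^ i)" using Finv[OF j] unfolding c_def z_def by simp
    finally show ?thesis unfolding c_def by (simp add: sc_power)
  qed
  have roots: "(\<Sum>j<N. (z ^ j) ^ i) = 0" if "0 < i" "i < N" for i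
  proof -
    have "\<not> int N dvd int i" using that nat_dvd_not_less[of i N] by simp
    hence "(\<Sum>j<N. (z powi int i) ^ j) = 0" unfolding z_def by (rule sum_roots_of_unity_powi[OF N])
    thus ?thesis by (simp add: power_mult[symmetric] mult.commute)
  qed
  have "(\<Sum>j<N. F (z ^ j * l)) * (1 - sc (l ^ N) (g ^ N))
      = (\<Sum>j<N. \<Sum>i<N. sc ((z ^ j * l) ^ i) (g ^ i))"
    by (simp add: sum_distrib_right one)
  also have "\<dots> = (\<Sum>i<N. \<Sum>j<N. sc ((z ^ j * l) ^ i) (g ^ i))" by (rule sum.swap)
  also have "\<dots> = (\<Sum>i<N. sc (l ^ i * (\<Sum>j<N. (z ^ j) ^ i)) (g ^ i))"
    by (simp add: sc_sum_left[symmetric] sum_distrib_left power_mult_distrib mult.commute)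
  also have "\<dots> = (\<Sum>i<N. if i = 0 then sc (of_nat N) 1 else 0)"
    by (rule sum.cong) (use roots N in auto)
  also have "\<dots> = sc (of_nat N) 1" using N by simp
  finally show ?thesis unfolding root_avg_def z_def[symmetric] using N
    by (simp add: sc_mult_left sc_sc)
qed

text \<open>The averaged resolvent is close to \<open>1\<close> at radius \<open>1 - e\<close> (where \<open>(1 - e)\<^sup>N g\<^sup>N\<close> is small)
  and moves little between radii \<open>1 - e\<close> and \<open>1 + e\<close>; so at radius \<open>1 + e\<close> it is still invertible,
  which bounds \<open>(1 + e)\<^sup>N g\<^sup>N\<close>.\<close>

lemma rickart_step:
  fixes F :: "complex \<Rightarrow> 'a"
  assumes g: "norm g \<le> 1"
    and Finv: "\<And>l. cmod l \<le> \<rho> \<Longrightarrow> F l * (1 - sc l g) = 1 \<and> (1 - sc l g) * F l = 1"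
    and M: "\<And>l. cmod l \<le> \<rho> \<Longrightarrow> norm (F l) \<le> M"
    and e: "0 < e" "e \<le> 1" "1 + e \<le> \<rho>" "2 * e * M\<^sup>2 \<le> 1/4"
    and N: "N > 0" "(1 - e) ^ N \<le> 1/5"
  shows "norm (g ^ N) < 1"
proof -
  define r where "r = complex_of_real (1 - e)"
  define r' where "r' = complex_of_real (1 + e)"
  have rr: "cmod r \<le> \<rho>" "cmod r' \<le> \<rho>" unfolding r_def r'_def norm_of_real using e by auto
  have nz: "cmod (cis (2*pi/N) ^ j * l) = cmod l" for j l by (simp add: norm_mult norm_power)
  have avg: "root_avg F N l * (1 - sc (l ^ N) (g ^ N)) = 1" if "cmod l \<le> \<rho>" for l
    by (rule root_avg_resolvent[OF N(1)]) (use Finv nz that in auto)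
  have "norm (F (cis (2*pi/N) ^ j * r') - F (cis (2*pi/N) ^ j * r)) \<le> 1/4" for j
  proof -
    have "cis (2*pi/N) ^ j * r' - cis (2*pi/N) ^ j * r = cis (2*pi/N) ^ j * complex_of_real (2 * e)"
      unfolding r_def r'_def by (simp add: algebra_simps)
    moreover have "norm (F (cis (2*pi/N) ^ j * r') - F (cis (2*pi/N) ^ j * r))
        \<le> cmod (cis (2*pi/N) ^ j * r' - cis (2*pi/N) ^ j * r) * M\<^sup>2"
      using Finv M rr nz by (intro resolvent_lipschitz[OF g]) auto
    ultimately show ?thesis using e nz[of j 1] by (simp add: norm_mult)
  qed
  hence d: "norm (root_avg F N r' - root_avg F N r) \<le> 1/4" using N(1)
    by (rule norm_root_avg_diff_le)
  define u where "u = sc (r ^ N) (g ^ N)"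
  define u' where "u' = sc (r' ^ N) (g ^ N)"
  have gN: "norm (g ^ N) \<le> 1" using norm_power_ineq[of g N] power_le_one[of "norm g" N] g by simp
  have "cmod (r ^ N) = (1 - e) ^ N" unfolding r_def norm_power norm_of_real using e by simp
  hence nu: "norm u \<le> 1/5" unfolding u_def norm_sc using mult_mono[OF N(2) gN] by simp
  have "norm (root_avg F N r - 1) \<le> norm u / (1 - norm u)"
    using one_sided_inverse_near_one[of "1 - u"] avg[OF rr(1)] nu unfolding u_def by simp
  also have "\<dots> \<le> 1/4" using nu norm_ge_zero[of u] by (simp add: field_simps)
  finally have s': "norm (1 - root_avg F N r') \<le> 1/2"
    using d norm_triangle_ineq[of "root_avg F N r' - root_avg F N r" "root_avg F N r - 1"]
    by (simp add: norm_minus_commute)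
  have "norm (- u') \<le> norm (1 - root_avg F N r') / (1 - norm (1 - root_avg F N r'))"
    using one_sided_inverse_near_one[of _ "1 - u'"] avg[OF rr(2)] s' unfolding u'_def by simp
  also have "\<dots> \<le> 1" using s' norm_ge_zero[of "1 - root_avg F N r'"] by (simp add: field_simps)
  finally have "norm u' \<le> 1" by simp
  moreover have "cmod (r' ^ N) = (1 + e) ^ N" unfolding r'_def norm_power norm_of_real using e
    by simp
  ultimately have "(1 + e) ^ N * norm (g ^ N) \<le> 1" unfolding u'_def norm_sc by simp
  moreover have "1 < (1 + e) ^ N" using e N by simp
  ultimately show ?thesis
    using mult_left_mono[of 1 "norm (g ^ N)" "(1 + e) ^ N"] by (cases "norm (g ^ N) < 1") linarith+
qed

text \<open>Rickart's elementary substitute for the spectral radius formula.\<close>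

lemma rickart_power_norm_less_one:
  assumes g: "norm g \<le> 1" and rho: "\<rho> > 1"
    and inv: "\<And>l. cmod l \<le> \<rho> \<Longrightarrow> invertible_el (1 - sc l g)"
  obtains N where "norm (g ^ N) < 1"
proof -
  define F where "F l = (SOME y. y * (1 - sc l g) = 1 \<and> (1 - sc l g) * y = 1)" for l
  have Finv: "F l * (1 - sc l g) = 1 \<and> (1 - sc l g) * F l = 1" if "cmod l \<le> \<rho>" for l
    unfolding F_def using inv[OF that] unfolding invertible_el_def by (rule someI_ex)
  obtain M0 where M0: "\<And>l. cmod l \<le> \<rho> \<Longrightarrow> norm (F l) \<le> M0"
    using resolvent_bounded[OF g Finv] by blast
  define M where "M = max M0 1"
  define e where "e = min ((\<rho> - 1)/2) (1 / (8 * M\<^sup>2))"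
  have M1': "M \<ge> 1" unfolding M_def by simp
  hence M1: "M\<^sup>2 \<ge> 1" by (simp add: one_le_power)
  have e: "0 < e" "e \<le> 1" "1 + e \<le> \<rho>" "2 * e * M\<^sup>2 \<le> 1/4"
  proof -
    show "0 < e" unfolding e_def using rho M1 by auto
    have "e \<le> (\<rho> - 1) / 2" unfolding e_def by (rule min.cobounded1)
    thus "1 + e \<le> \<rho>" using rho by (simp add: field_simps)
    have "e * M\<^sup>2 \<le> 1 / (8 * M\<^sup>2) * M\<^sup>2" unfolding e_def using M1 by (intro mult_right_mono) auto
    also have "\<dots> = 1/8" using M1' by simp
    finally show "2 * e * M\<^sup>2 \<le> 1/4" by simp
    have "e \<le> 1 / (8 * M\<^sup>2)" unfolding e_def by (rule min.cobounded2)
    also have "\<dots> \<le> 1" using M1 by (simp add: divide_le_eq)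
    finally show "e \<le> 1" .
  qed
  have "\<forall>\<^sub>F N in sequentially. \<bar>(1 - e) ^ N\<bar> < 1/5"
    by (rule Archimedean_eventually_pow_inverse) (use e in auto)
  then obtain N1 where N1: "\<And>N. N \<ge> N1 \<Longrightarrow> \<bar>(1 - e) ^ N\<bar> < 1/5"
    unfolding eventually_sequentially by blast
  have "(1 - e) ^ Suc N1 \<le> 1/5"
    using N1[of "Suc N1"] abs_ge_self[of "(1 - e) ^ Suc N1"] by linarith
  moreover have "\<And>l. cmod l \<le> \<rho> \<Longrightarrow> norm (F l) \<le> M"
    using M0 unfolding M_def by (meson max.coboundedI1)
  ultimately have "norm (g ^ Suc N1) < 1"
    by (intro rickart_step[OF g Finv _ e]) auto
  thus thesis by (rule that)
qed

section \<open>Consequences for *-homomorphisms and projections\<close>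

lemma invertible_el_minus_scalar:
  assumes "cmod m > norm M"
  shows "invertible_el (M - sc m 1)"
proof -
  have m0: "m \<noteq> 0" using assms by auto
  have "norm (sc (1/m) M) < 1" using assms m0 by (simp add: norm_sc norm_divide field_simps)
  hence "invertible_el (sc (- m) (1 - sc (1/m) M))"
    using m0 by (intro invertible_el_sc invertible_el_one_minus) auto
  also have "sc (- m) (1 - sc (1/m) M) = M - sc m 1"
    using m0 by (simp add: sc_diff_right sc_sc sc_minus_left)
  finally show ?thesis .
qed

lemma selfadj_spectral_point:
  assumes sa: "st h = h" and h0: "h \<noteq> 0" and rho: "\<rho> > 1"
  obtains l where "cmod l \<le> \<rho> / norm h" "\<not> invertible_el (1 - sc l h)"
proof -
  define g where "g = sc (complex_of_real (1 / norm h)) h"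
  have ng: "norm g = 1" unfolding g_def using h0 by (simp add: norm_sc norm_divide)
  have sg: "st g = g" unfolding g_def by (simp add: st_sc sa)
  have "\<exists>l. cmod l \<le> \<rho> / norm h \<and> \<not> invertible_el (1 - sc l h)"
  proof (rule ccontr)
    assume A: "\<not> ?thesis"
    have inv: "invertible_el (1 - sc l g)" if l: "cmod l \<le> \<rho>" for l
    proof -
      have "cmod (l * complex_of_real (1 / norm h)) \<le> \<rho> / norm h"
        using l h0 by (simp add: norm_divide divide_right_mono)
      hence "invertible_el (1 - sc (l * complex_of_real (1 / norm h)) h)" using A by blast
      thus ?thesis unfolding g_def by (simp add: sc_sc)
    qed
    have "norm g \<le> 1" using ng by simp
    then obtain N where N: "norm (g ^ N) < 1"
      using rho inv by (rule rickart_power_norm_less_one)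
    have gk: "norm (g ^ k) \<le> 1" for k using norm_power_ineq[of g k] ng by simp
    have "g ^ (2 ^ N) = g ^ N * g ^ (2 ^ N - N)"
      using less_exp[of N] by (simp add: power_add[symmetric])
    hence "norm (g ^ (2 ^ N)) \<le> norm (g ^ N) * norm (g ^ (2 ^ N - N))" by (simp add: norm_mult_ineq)
    also have "\<dots> \<le> norm (g ^ N)" using gk[of "2 ^ N - N"] by (simp add: mult_left_le)
    finally have "norm (g ^ (2 ^ N)) < 1" using N by simp
    thus False using norm_selfadj_power2[OF sg, of N] ng by simp
  qed
  thus thesis using that by blast
qed

lemma
  assumes "star_hom sc st f"
  shows star_hom_add: "f (x + y) = f x + f y"
    and star_hom_mult: "f (x * y) = f x * f y"
    and star_hom_sc: "f (sc c x) = sc c (f x)"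
    and star_hom_st: "f (st x) = st (f x)"
    and star_hom_one: "f 1 = 1"
  using assms unfolding star_hom_def by blast+

lemma star_hom_diff: "star_hom sc st f \<Longrightarrow> f (x - y) = f x - f y"
  using star_hom_add[of f "x - y" y] by simp

text \<open>A *-homomorphism preserves invertibility, so it can only shrink the spectrum, and the norm
  of a self-adjoint element is its spectral radius.\<close>

lemma star_hom_norm_le_selfadj:
  assumes f: "star_hom sc st f" and sa: "st h = h"
  shows "norm (f h) \<le> norm h"
proof (rule ccontr)
  assume "\<not> ?thesis"
  hence lt: "norm h < norm (f h)" by simp
  define g where "g = f h"
  have g0: "g \<noteq> 0" using lt g_def by auto
  have sg: "st g = g" unfolding g_def using star_hom_st[OF f, of h] sa by simp
  define r where "r = 2 / (norm h + norm g)"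
  have den: "norm h + norm g > 0" using g0 by (simp add: add_nonneg_pos)
  have r1: "r * norm h < 1" unfolding r_def using lt den g_def by (simp add: field_simps)
  have r2: "r * norm g > 1" unfolding r_def using lt den g_def by (simp add: field_simps)
  obtain l where l: "cmod l \<le> r * norm g / norm g" "\<not> invertible_el (1 - sc l g)"
    using selfadj_spectral_point[OF sg g0 r2] by blast
  have "norm (sc l h) \<le> r * norm h"
    using l(1) g0 by (simp add: norm_sc mult_right_mono)
  hence "invertible_el (1 - sc l h)" using r1 by (intro invertible_el_one_minus) simp
  then obtain y where y: "y * (1 - sc l h) = 1" "(1 - sc l h) * y = 1"
    unfolding invertible_el_def by blast
  have "f y * (1 - sc l g) = 1" "(1 - sc l g) * f y = 1"
    using arg_cong[OF y(1), of f] arg_cong[OF y(2), of f] unfolding g_def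
    by (simp_all add: star_hom_mult[OF f] star_hom_diff[OF f] star_hom_one[OF f] star_hom_sc[OF f])
  hence "invertible_el (1 - sc l g)" unfolding invertible_el_def by blast
  thus False using l(2) by simp
qed

lemma star_hom_norm_le:
  assumes f: "star_hom sc st f"
  shows "norm (f a) \<le> norm a"
proof -
  have "(norm (f a))\<^sup>2 = norm (f (st a * a))"
    by (simp add: cstar_id star_hom_mult[OF f] star_hom_st[OF f])
  also have "\<dots> \<le> norm (st a * a)" by (rule star_hom_norm_le_selfadj[OF f]) (simp add: st_mult)
  also have "\<dots> = (norm a)\<^sup>2" by (rule cstar_id)
  finally show ?thesis by (rule power2_le_imp_le) simp
qed

definition is_proj :: "'a \<Rightarrow> bool" where
  "is_proj p \<longleftrightarrow> st p = p \<and> p * p = p"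

lemma norm_proj_le_one: "is_proj p \<Longrightarrow> norm p \<le> 1"
  using cstar_id[of p] unfolding is_proj_def by (cases "norm p = 0") (auto simp: power2_eq_square)

lemma is_proj_one_minus: "is_proj p \<Longrightarrow> is_proj (1 - p)"
  unfolding is_proj_def by (simp add: st_diff algebra_simps)

text \<open>Invertibility in the corner \<open>e A e\<close>, witnessed in \<open>A\<close> by \<open>e + s h - (1 + s \<sigma>)\<close>, gives invertibility
  of \<open>h - \<sigma>\<close> in \<open>A\<close>: on \<open>1 - e\<close> the element \<open>h - \<sigma>\<close> acts as the nonzero scalar \<open>-\<sigma>\<close>.\<close>

lemma corner_invertible_el:
  assumes ee: "e * e = e" and eh: "e * h = h" "h * e = h" and s: "s \<noteq> 0" and sg: "\<sigma> \<noteq> 0"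
    and inv: "invertible_el (e + sc s h - sc (1 + s * \<sigma>) 1)"
  shows "invertible_el (h - sc \<sigma> 1)"
proof -
  define M where "M = e + sc s h - sc (1 + s * \<sigma>) 1"
  obtain W where W: "W * M = 1" "M * W = 1" using inv unfolding invertible_el_def M_def by blast
  have "e * M = M * e" unfolding M_def
    by (simp add: algebra_simps ee eh sc_mult_left sc_mult_right)
  hence eW: "e * W = W * e" by (rule commute_with_inverse[OF W])
  have "h * M = M * h" unfolding M_def
    by (simp add: algebra_simps eh sc_mult_left sc_mult_right)
  hence hW: "h * W = W * h" by (rule commute_with_inverse[OF W])
  define H where "H = h - sc \<sigma> 1"
  define Z where "Z = sc s (W * e) - sc (1 / \<sigma>) (1 - e)"
  have Me: "M * e = sc s (H * e)" unfolding M_def H_def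
    by (simp add: algebra_simps ee eh sc_mult_left sc_mult_right sc_diff_right sc_add_left sc_sc)
  have "H * (sc s (W * e)) = sc s (H * e * W)" by (simp add: sc_mult_right mult.assoc eW)
  also have "\<dots> = M * e * W" using Me by (simp add: sc_mult_left)
  also have "\<dots> = e" using W(2) eW by (metis mult.assoc mult_1_left)
  finally have A: "H * (sc s (W * e)) = e" .
  have "H * (1 - e) = - sc \<sigma> (1 - e)" unfolding H_def
    by (simp add: algebra_simps eh sc_mult_left sc_mult_right sc_diff_right)
  hence B: "H * sc (1 / \<sigma>) (1 - e) = - (1 - e)"
    using sg by (simp add: sc_mult_right sc_minus_right sc_sc)
  have HZ: "H * Z = 1" unfolding Z_def using A B by (simp add: right_diff_distrib)
  have "(W * e) * h = h * (W * e)" using eW eh hW by (metis mult.assoc)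
  moreover have "(1 - e) * h = h * (1 - e)" by (simp add: algebra_simps eh)
  ultimately have "Z * h = h * Z" unfolding Z_def
    by (simp add: left_diff_distrib right_diff_distrib sc_mult_left sc_mult_right eh)
  hence "Z * H = H * Z" unfolding H_def
    by (simp add: left_diff_distrib right_diff_distrib sc_mult_left sc_mult_right)
  thus ?thesis unfolding invertible_el_def H_def[symmetric] using HZ by auto
qed

lemma corner_selfadj_eq_0:
  assumes ee: "e * e = e" and eh: "e * h = h" "h * e = h" and sa: "st h = h" and t: "t > 0"
    and plus: "norm (e + sc (complex_of_real t) h) \<le> 1"
    and minus: "norm (e - sc (complex_of_real t) h) \<le> 1"
  shows "h = 0"
proof (rule ccontr)
  assume h0: "h \<noteq> 0"
  obtain l where l: "\<not> invertible_el (1 - sc l h)"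
    using selfadj_spectral_point[OF sa h0, of 2] by auto
  have l0: "l \<noteq> 0"
    using l unfolding invertible_el_def by (metis diff_zero mult_1_left sc_zero_left)
  define \<sigma> where "\<sigma> = 1 / l"
  have sg: "\<sigma> \<noteq> 0" using l0 unfolding \<sigma>_def by simp
  have bound: "cmod (1 + s * \<sigma>) \<le> 1" if s0: "s \<noteq> 0" and nM: "norm (e + sc s h) \<le> 1" for s
  proof (rule ccontr)
    assume "\<not> ?thesis"
    hence "invertible_el (e + sc s h - sc (1 + s * \<sigma>) 1)"
      using nM by (intro invertible_el_minus_scalar) simp
    hence "invertible_el (sc (- l) (h - sc \<sigma> 1))"
      using l0 by (intro invertible_el_sc corner_invertible_el[OF ee eh s0 sg]) auto
    also have "sc (- l) (h - sc \<sigma> 1) = 1 - sc l h"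
      using l0 unfolding \<sigma>_def by (simp add: sc_diff_right sc_sc sc_minus_left)
    finally show False using l by simp
  qed
  have "cmod (1 + complex_of_real t * \<sigma>) \<le> 1" by (rule bound) (use t plus in auto)
  moreover have "cmod (1 + (- complex_of_real t) * \<sigma>) \<le> 1"
    by (rule bound) (use t minus in \<open>auto simp: sc_minus_left\<close>)
  ultimately have "complex_of_real t * \<sigma> = 0" by (intro complex_eq_0_of_cmod_one_pm) auto
  thus False using t sg by simp
qed

lemma norm_one_minus_sc_sum_proj_le:
  fixes t :: real
  assumes K: "finite K" and P: "\<And>k. k \<in> K \<Longrightarrow> is_proj (P k)"
    and t: "0 \<le> t" "t * card K \<le> 1"
  shows "norm (1 - sc (complex_of_real t) (\<Sum>k\<in>K. P k)) \<le> 1"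
proof -
  have "1 - sc (complex_of_real t) (\<Sum>k\<in>K. P k)
      = sc (complex_of_real (1 - t * card K)) 1 + (\<Sum>k\<in>K. sc (complex_of_real t) (1 - P k))"
    by (simp add: sc_sum_right[symmetric] sum_subtractf sc_diff_right sc_diff_left
        sc_of_nat[symmetric] sc_sc mult.commute)
  also have "norm \<dots> \<le> (1 - t * card K) + (\<Sum>k\<in>K. t * 1)"
  proof (rule order_trans[OF norm_triangle_ineq add_mono])
    show "norm (sc (complex_of_real (1 - t * card K)) (1::'a)) \<le> 1 - t * card K"
      using t unfolding norm_sc_one norm_of_real by simp
    show "norm (\<Sum>k\<in>K. sc (complex_of_real t) (1 - P k)) \<le> (\<Sum>k\<in>K. t * 1)"
      using norm_proj_le_one[OF is_proj_one_minus[OF P]] t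
      by (intro sum_norm_le) (simp add: norm_sc mult_left_le)
  qed
  finally show ?thesis by simp
qed

text \<open>For \<open>h = e f e\<close> both \<open>e - t h = e (1 - t f) e\<close> and \<open>e + t h = e (1 - t \<Sum>P) e\<close> are
  contractions, which forces \<open>h = 0\<close>.\<close>

lemma proj_sum_one_orth:
  assumes e: "is_proj e" and f: "is_proj f" and K: "finite K" and P: "\<And>k. k \<in> K \<Longrightarrow> is_proj (P k)"
    and sum1: "e + f + (\<Sum>k\<in>K. P k) = 1"
  shows "f * e = 0"
proof -
  define q where "q = (\<Sum>k\<in>K. P k)"
  define h where "h = e * f * e"
  define t where "t = 1 / (real (card K) + 1)"
  have ee: "e * e = e" and se: "st e = e" using e unfolding is_proj_def by auto
  have ff: "f * f = f" and sf: "st f = f" using f unfolding is_proj_def by auto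
  have sa: "st h = h" unfolding h_def by (simp add: st_mult se sf mult.assoc)
  have eh: "e * h = h" "h * e = h" unfolding h_def by (simp_all add: ee mult.assoc[symmetric])
    (simp add: mult.assoc ee)
  have t: "t > 0" "t \<le> 1" "t * card K \<le> 1" unfolding t_def by (auto simp: field_simps)
  have ne: "norm e \<le> 1" by (rule norm_proj_le_one[OF e])
  have compress: "norm (e * X * e) \<le> 1" if "norm X \<le> 1" for X
  proof -
    have "norm (e * X * e) \<le> norm e * norm X * norm e" by (rule norm_mult3_le)
    also have "\<dots> \<le> 1 * 1 * 1" using ne that by (intro mult_mono) auto
    finally show ?thesis by simp
  qed
  have "e * q * e = - h"
  proof -
    have "e * (e + f + q) * e = e" using sum1 ee unfolding q_def by simp
    hence "e + h + e * q * e = e" unfolding h_def by (simp add: distrib_left distrib_right ee)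
    thus ?thesis by (simp add: add.commute eq_neg_iff_add_eq_0)
  qed
  hence "e + sc (complex_of_real t) h = e * (1 - sc (complex_of_real t) q) * e"
    by (simp add: algebra_simps ee sc_mult_left sc_mult_right sc_minus_right)
  also have "norm \<dots> \<le> 1"
    using norm_one_minus_sc_sum_proj_le[OF K P] t unfolding q_def by (intro compress) auto
  finally have plus: "norm (e + sc (complex_of_real t) h) \<le> 1" .
  have "e - sc (complex_of_real t) h = e * (1 - sc (complex_of_real t) f) * e"
    unfolding h_def by (simp add: algebra_simps ee sc_mult_left sc_mult_right)
  also have "norm \<dots> \<le> 1"
    using norm_one_minus_sc_sum_proj_le[of "{()}" "\<lambda>_. f" t] f t by (intro compress) auto
  finally have minus: "norm (e - sc (complex_of_real t) h) \<le> 1" .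
  have "f * (f * e) = f * e" by (simp add: mult.assoc[symmetric] ff)
  hence "(norm (f * e))\<^sup>2 = norm h"
    unfolding cstar_id[symmetric] h_def by (simp add: st_mult se sf mult.assoc)
  also have "h = 0" by (rule corner_selfadj_eq_0[OF ee eh sa t(1) plus minus])
  finally show ?thesis by simp
qed

end

section \<open>Words in a Cuntz family\<close>

locale cuntz_family = cstar_alg sc st
  for sc :: "complex \<Rightarrow> 'a::{real_normed_algebra_1,banach} \<Rightarrow> 'a" and st +
  fixes s :: "nat \<Rightarrow> 'a" and n :: nat
  assumes n2: "n \<ge> 2"
    and isometry: "\<forall>i<n. st (s i) * s i = 1"
    and cuntz_sum: "(\<Sum>i<n. s i * st (s i)) = 1"
begin

definition s_word :: "nat list \<Rightarrow> 'a" where "s_word \<mu> = foldr (\<lambda>i a. s i * a) \<mu> 1"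

lemma s_word_Nil [simp]: "s_word [] = 1" by (simp add: s_word_def)
lemma s_word_Cons [simp]: "s_word (i # \<mu>) = s i * s_word \<mu>" by (simp add: s_word_def)
lemma s_word_append: "s_word (\<mu> @ \<nu>) = s_word \<mu> * s_word \<nu>"
  by (induction \<mu>) (auto simp: mult.assoc)

definition words :: "nat \<Rightarrow> nat list set" where
  "words l = {xs. set xs \<subseteq> {..<n} \<and> length xs = l}"

lemma finite_words [simp]: "finite (words l)"
  unfolding words_def by (rule finite_lists_length_eq) simp
lemma card_words: "card (words l) = n ^ l" unfolding words_def by (subst card_lists_length_eq) auto

lemma sum_words_Suc: "(\<Sum>\<mu>\<in>words (Suc l). f \<mu>) = (\<Sum>i<n. \<Sum>\<mu>\<in>words l. f (i # \<mu>))"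
proof -
  have eq: "words (Suc l) = (\<lambda>(xs, i). i # xs) ` (words l \<times> {..<n})"
    unfolding words_def by (rule lists_length_Suc_eq)
  have inj: "inj_on (\<lambda>(xs, i). i # xs) (words l \<times> {..<n})" by (auto simp: inj_on_def)
  have "(\<Sum>\<mu>\<in>words (Suc l). f \<mu>) = (\<Sum>p\<in>words l \<times> {..<n}. f (snd p # fst p))"
    unfolding eq by (subst sum.reindex[OF inj]) (simp add: case_prod_beta)
  also have "\<dots> = (\<Sum>(xs, i)\<in>words l \<times> {..<n}. f (i # xs))" by (simp add: case_prod_beta)
  also have "\<dots> = (\<Sum>\<mu>\<in>words l. \<Sum>i<n. f (i # \<mu>))" by (rule sum.cartesian_product[symmetric])
  also have "\<dots> = (\<Sum>i<n. \<Sum>\<mu>\<in>words l. f (i # \<mu>))" by (rule sum.swap)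
  finally show ?thesis .
qed

lemma append_mem_words: "\<mu> \<in> words a \<Longrightarrow> \<nu> \<in> words b \<Longrightarrow> \<mu> @ \<nu> \<in> words (a + b)"
  unfolding words_def by auto

lemma take_drop_mem_words: "\<gamma> \<in> words (L + r) \<Longrightarrow> take L \<gamma> \<in> words L \<and> drop L \<gamma> \<in> words r"
  unfolding words_def by (auto dest: in_set_takeD in_set_dropD)

lemma sum_words_add: "(\<Sum>\<gamma>\<in>words (a + b). f \<gamma>) = (\<Sum>\<mu>\<in>words a. \<Sum>\<nu>\<in>words b. f (\<mu> @ \<nu>))"
proof -
  have eq: "words (a + b) = (\<lambda>(\<mu>, \<nu>). \<mu> @ \<nu>) ` (words a \<times> words b)"
  proof
    show "words (a + b) \<subseteq> (\<lambda>(\<mu>, \<nu>). \<mu> @ \<nu>) ` (words a \<times> words b)"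
    proof
      fix \<gamma> assume g: "\<gamma> \<in> words (a + b)"
      hence "(take a \<gamma>, drop a \<gamma>) \<in> words a \<times> words b" using take_drop_mem_words by auto
      thus "\<gamma> \<in> (\<lambda>(\<mu>, \<nu>). \<mu> @ \<nu>) ` (words a \<times> words b)"
        by (auto intro!: image_eqI[of _ _ "(take a \<gamma>, drop a \<gamma>)"])
    qed
    show "(\<lambda>(\<mu>, \<nu>). \<mu> @ \<nu>) ` (words a \<times> words b) \<subseteq> words (a + b)" by (auto intro: append_mem_words)
  qed
  have inj: "inj_on (\<lambda>(\<mu>, \<nu>). \<mu> @ \<nu>) (words a \<times> words b)"
    by (auto simp: inj_on_def words_def)
  have "(\<Sum>\<gamma>\<in>words (a + b). f \<gamma>) = (\<Sum>p\<in>words a \<times> words b. f (fst p @ snd p))"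
    unfolding eq by (subst sum.reindex[OF inj]) (simp add: case_prod_beta)
  also have "\<dots> = (\<Sum>(\<mu>, \<nu>)\<in>words a \<times> words b. f (\<mu> @ \<nu>))" by (simp add: case_prod_beta)
  also have "\<dots> = (\<Sum>\<mu>\<in>words a. \<Sum>\<nu>\<in>words b. f (\<mu> @ \<nu>))" by (rule sum.cartesian_product[symmetric])
  finally show ?thesis .
qed

lemma is_proj_s_mult_adj: "i < n \<Longrightarrow> is_proj (s i * st (s i))"
  unfolding is_proj_def using isometry
    by (simp add: st_mult mult.assoc) (simp add: mult.assoc[symmetric])

lemma s_adj_mult_s_orth: assumes "i < n" "j < n" "i \<noteq> j" shows "st (s i) * s j = 0"
proof -
  define P where "P k = s k * st (s k)" for k
  define K where "K = {..<n} - {i, j}"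
  have "(\<Sum>k<n. P k) = P j + (\<Sum>k\<in>{..<n} - {j}. P k)" by (rule sum.remove) (use assms in auto)
  also have "(\<Sum>k\<in>{..<n} - {j}. P k) = P i + (\<Sum>k\<in>{..<n} - {j} - {i}. P k)"
    by (rule sum.remove) (use assms in auto)
  also have "{..<n} - {j} - {i} = K" unfolding K_def by auto
  finally have "P j + P i + (\<Sum>k\<in>K. P k) = 1" using cuntz_sum unfolding P_def
    by (simp add: add.assoc)
  hence "P i * P j = 0"
    by (intro proj_sum_one_orth[of "P j" "P i" K P]) (use assms in \<open>auto simp: P_def K_def intro: is_proj_s_mult_adj\<close>)
  hence "st (s i) * (P i * P j) * s j = 0" by simp
  moreover have "st (s i) * (P i * P j) * s j = st (s i) * s j"
    unfolding P_def using isometry assms by (simp add: mult.assoc) (simp add: mult.assoc[symmetric])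
  ultimately show ?thesis by simp
qed

lemma s_adj_mult_s: "i < n \<Longrightarrow> j < n \<Longrightarrow> st (s i) * s j = (if i = j then 1 else 0)"
  using s_adj_mult_s_orth isometry by auto

lemma adj_s_word_mult_s_word:
  assumes "set \<nu> \<subseteq> {..<n}" "set \<alpha> \<subseteq> {..<n}"
  shows "st (s_word \<nu>) * s_word \<alpha> = (if \<exists>r. \<alpha> = \<nu> @ r then s_word (drop (length \<nu>) \<alpha>)
          else if \<exists>r. \<nu> = \<alpha> @ r then st (s_word (drop (length \<alpha>) \<nu>)) else 0)"
  using assms
proof (induction \<nu> arbitrary: \<alpha>)
  case Nil thus ?case by simp
next
  case (Cons i \<nu>)
  show ?case
  proof (cases \<alpha>)
    case Nil thus ?thesis by simp
  next
    case (Cons j \<alpha>')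
    have ij: "i < n" "j < n" using Cons.prems \<open>\<alpha> = j # \<alpha>'\<close> by auto
    have "st (s_word (i # \<nu>)) * s_word \<alpha> = st (s_word \<nu>) * (st (s i) * s j) * s_word \<alpha>'"
      using Cons by (simp add: st_mult mult.assoc)
    also have "\<dots> = (if i = j then st (s_word \<nu>) * s_word \<alpha>' else 0)" using s_adj_mult_s[OF ij]
      by simp
    finally have L: "st (s_word (i # \<nu>)) * s_word \<alpha> = (if i = j then st (s_word \<nu>) * s_word \<alpha>' else 0)" .
    have e1: "(\<exists>r. \<alpha> = (i # \<nu>) @ r) \<longleftrightarrow> i = j \<and> (\<exists>r. \<alpha>' = \<nu> @ r)"
      using \<open>\<alpha> = j # \<alpha>'\<close> by auto
    have e2: "(\<exists>r. i # \<nu> = \<alpha> @ r) \<longleftrightarrow> i = j \<and> (\<exists>r. \<nu> = \<alpha>' @ r)"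
      using \<open>\<alpha> = j # \<alpha>'\<close> by auto
    have IH: "st (s_word \<nu>) * s_word \<alpha>' = (if \<exists>r. \<alpha>' = \<nu> @ r then s_word (drop (length \<nu>) \<alpha>')
          else if \<exists>r. \<nu> = \<alpha>' @ r then st (s_word (drop (length \<alpha>') \<nu>)) else 0)"
      using Cons.IH[of \<alpha>'] Cons.prems \<open>\<alpha> = j # \<alpha>'\<close> by simp
    show ?thesis
    proof (cases "i = j")
      case True
      have d1: "drop (length (i # \<nu>)) \<alpha> = drop (length \<nu>) \<alpha>'" using \<open>\<alpha> = j # \<alpha>'\<close> by simp
      have d2: "drop (length \<alpha>) (i # \<nu>) = drop (length \<alpha>') \<nu>" using \<open>\<alpha> = j # \<alpha>'\<close> True by simp
      have L1: "st (s_word (i # \<nu>)) * s_word \<alpha> = st (s_word \<nu>) * s_word \<alpha>'" using L True by simp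
      have E1: "(\<exists>r. \<alpha> = (i # \<nu>) @ r) = (\<exists>r. \<alpha>' = \<nu> @ r)" using e1 True by simp
      have E2: "(\<exists>r. i # \<nu> = \<alpha> @ r) = (\<exists>r. \<nu> = \<alpha>' @ r)" using e2 True by simp
      show ?thesis by (simp only: L1 E1 E2 IH d1 d2)
    next
      case False
      thus ?thesis by (simp only: L e1 e2 simp_thms if_False)
    qed
  qed
qed

lemma s_word_isometry: "set \<mu> \<subseteq> {..<n} \<Longrightarrow> st (s_word \<mu>) * s_word \<mu> = 1"
  using adj_s_word_mult_s_word[of \<mu> \<mu>] by simp

lemma s_word_orth: "\<mu> \<in> words l \<Longrightarrow> \<nu> \<in> words l \<Longrightarrow> st (s_word \<mu>) * s_word \<nu> = (if \<mu> = \<nu> then 1 else 0)"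
proof -
  assume a: "\<mu> \<in> words l" "\<nu> \<in> words l"
  have len: "length \<mu> = length \<nu>" using a unfolding words_def by simp
  have e1: "(\<exists>r. \<nu> = \<mu> @ r) \<longleftrightarrow> \<mu> = \<nu>" using len by auto
  have e2: "(\<exists>r. \<mu> = \<nu> @ r) \<longleftrightarrow> \<mu> = \<nu>" using len by auto
  show ?thesis using adj_s_word_mult_s_word[of \<mu> \<nu>] a unfolding words_def e1 e2 by simp
qed

lemma norm_s_word: "set \<mu> \<subseteq> {..<n} \<Longrightarrow> norm (s_word \<mu>) = 1"
proof -
  assume a: "set \<mu> \<subseteq> {..<n}"
  have "(norm (s_word \<mu>))\<^sup>2 = 1" using cstar_id[of "s_word \<mu>"] s_word_isometry[OF a] by simp
  hence "norm (s_word \<mu>) = 1 \<or> norm (s_word \<mu>) = - 1" by (simp add: power2_eq_1_iff)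
  thus ?thesis using norm_ge_zero[of "s_word \<mu>"] by linarith
qed

lemma norm_s_word_words: "\<mu> \<in> words l \<Longrightarrow> norm (s_word \<mu>) = 1" unfolding words_def
  by (auto intro: norm_s_word)

lemma sum_range_projs_words: "(\<Sum>\<mu>\<in>words l. s_word \<mu> * st (s_word \<mu>)) = 1"
proof (induction l)
  case 0
  have "words 0 = {[]}" unfolding words_def by auto
  thus ?case by simp
next
  case (Suc l)
  have "(\<Sum>\<mu>\<in>words (Suc l). s_word \<mu> * st (s_word \<mu>)) = (\<Sum>i<n. \<Sum>\<mu>\<in>words l. s i * (s_word \<mu> * st (s_word \<mu>)) * st (s i))"
    by (simp add: sum_words_Suc st_mult mult.assoc)
  also have "\<dots> = (\<Sum>i<n. s i * (\<Sum>\<mu>\<in>words l. s_word \<mu> * st (s_word \<mu>)) * st (s i))"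
    by (simp add: sum_distrib_left sum_distrib_right)
  also have "\<dots> = 1" using Suc cuntz_sum by simp
  finally show ?case .
qed

text \<open>\<open>wspan L\<close> is the span of the words of length \<open>L\<close>, which form an orthonormal basis of it;
  \<open>level_map b M L\<close> says that \<open>b\<close> maps \<open>wspan L\<close> into \<open>wspan M\<close>, so that on \<open>wspan L\<close> it acts
  as an \<open>n\<^sup>M \<times> n\<^sup>L\<close> matrix, whose squared Hilbert--Schmidt norm is \<open>hs_norm b L\<close>.\<close>

definition wspan :: "nat \<Rightarrow> 'a set" where
  "wspan L = {x. \<exists>a. x = (\<Sum>\<mu>\<in>words L. sc (a \<mu>) (s_word \<mu>))}"

lemma wspan_zero [simp]: "0 \<in> wspan L" unfolding wspan_def by (auto intro: exI[of _ "\<lambda>_. 0"])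

lemma wspan_add: "v \<in> wspan L \<Longrightarrow> w \<in> wspan L \<Longrightarrow> v + w \<in> wspan L"
  unfolding wspan_def
proof (elim CollectE exE, intro CollectI)
  fix a b assume "v = (\<Sum>\<mu>\<in>words L. sc (a \<mu>) (s_word \<mu>))" "w = (\<Sum>\<mu>\<in>words L. sc (b \<mu>) (s_word \<mu>))"
  thus "\<exists>c. v + w = (\<Sum>\<mu>\<in>words L. sc (c \<mu>) (s_word \<mu>))"
    by (intro exI[of _ "\<lambda>\<mu>. a \<mu> + b \<mu>"]) (simp add: sc_add_left sum.distrib)
qed

lemma wspan_sc: "v \<in> wspan L \<Longrightarrow> sc c v \<in> wspan L"
  unfolding wspan_def
proof (elim CollectE exE, intro CollectI)
  fix a assume "v = (\<Sum>\<mu>\<in>words L. sc (a \<mu>) (s_word \<mu>))"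
  thus "\<exists>b. sc c v = (\<Sum>\<mu>\<in>words L. sc (b \<mu>) (s_word \<mu>))"
    by (intro exI[of _ "\<lambda>\<mu>. c * a \<mu>"]) (simp add: sc_sum_right sc_sc)
qed

lemma wspan_sum: "finite A \<Longrightarrow> (\<And>i. i \<in> A \<Longrightarrow> f i \<in> wspan L) \<Longrightarrow> sum f A \<in> wspan L"
  by (induction A rule: finite_induct) (auto intro: wspan_add)

lemma s_word_mem_wspan: "\<mu> \<in> words L \<Longrightarrow> s_word \<mu> \<in> wspan L"
  unfolding wspan_def
proof (intro CollectI exI)
  assume m: "\<mu> \<in> words L"
  show "s_word \<mu> = (\<Sum>\<nu>\<in>words L. sc (if \<nu> = \<mu> then 1 else 0) (s_word \<nu>))"
    using m by (simp add: if_distrib[of "\<lambda>c. sc c _"] cong: if_cong)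
qed

lemma wspanE:
  assumes "v \<in> wspan L" obtains a where "v = (\<Sum>\<mu>\<in>words L. sc (a \<mu>) (s_word \<mu>))"
  using assms unfolding wspan_def by blast

lemma adj_s_word_mult_expansion:
  assumes "\<nu> \<in> words L" shows "st (s_word \<nu>) * (\<Sum>\<mu>\<in>words L. sc (a \<mu>) (s_word \<mu>)) = sc (a \<nu>) 1"
proof -
  have "st (s_word \<nu>) * (\<Sum>\<mu>\<in>words L. sc (a \<mu>) (s_word \<mu>)) = (\<Sum>\<mu>\<in>words L. sc (a \<mu>) (st (s_word \<nu>) * s_word \<mu>))"
    by (simp add: sum_distrib_left sc_mult_right)
  also have "\<dots> = (\<Sum>\<mu>\<in>words L. if \<mu> = \<nu> then sc (a \<nu>) 1 else 0)"
    by (rule sum.cong) (use assms in \<open>auto simp: s_word_orth\<close>)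
  also have "\<dots> = sc (a \<nu>) 1" using assms by simp
  finally show ?thesis .
qed

definition wcoeff :: "'a \<Rightarrow> nat list \<Rightarrow> complex" where
  "wcoeff v \<mu> = (SOME c. st (s_word \<mu>) * v = sc c 1)"

lemma adj_s_word_mult_wspan: assumes "v \<in> wspan L" "\<mu> \<in> words L"
  shows "st (s_word \<mu>) * v = sc (wcoeff v \<mu>) 1"
proof -
  obtain a where a: "v = (\<Sum>\<mu>\<in>words L. sc (a \<mu>) (s_word \<mu>))" using assms(1) by (rule wspanE)
  have "\<exists>c. st (s_word \<mu>) * v = sc c 1" using adj_s_word_mult_expansion[OF assms(2), of a] a
    by blast
  thus ?thesis unfolding wcoeff_def by (rule someI_ex)
qed

lemma expand_words: "x = (\<Sum>\<mu>\<in>words L. s_word \<mu> * (st (s_word \<mu>) * x))"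
proof -
  have "x = (\<Sum>\<mu>\<in>words L. s_word \<mu> * st (s_word \<mu>)) * x" by (simp add: sum_range_projs_words)
  thus ?thesis by (simp add: sum_distrib_right mult.assoc)
qed

lemma wspan_expansion: assumes "v \<in> wspan L" shows "v = (\<Sum>\<mu>\<in>words L. sc (wcoeff v \<mu>) (s_word \<mu>))"
proof -
  have "v = (\<Sum>\<mu>\<in>words L. s_word \<mu> * (st (s_word \<mu>) * v))" by (rule expand_words)
  also have "\<dots> = (\<Sum>\<mu>\<in>words L. sc (wcoeff v \<mu>) (s_word \<mu>))"
    by (rule sum.cong) (use adj_s_word_mult_wspan[OF assms] in \<open>auto simp: sc_mult_right\<close>)
  finally show ?thesis .
qed

lemma adj_mult_self_wspan_coeffs: assumes "v \<in> wspan L"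
  shows "st v * v = sc (complex_of_real (\<Sum>\<mu>\<in>words L. (cmod (wcoeff v \<mu>))\<^sup>2)) 1"
proof -
  have "st v * v = st (\<Sum>\<mu>\<in>words L. sc (wcoeff v \<mu>) (s_word \<mu>)) * v" using wspan_expansion[OF assms]
    by simp
  also have "\<dots> = (\<Sum>\<mu>\<in>words L. sc (cnj (wcoeff v \<mu>)) (st (s_word \<mu>) * v))"
    by (simp add: st_sum st_sc sum_distrib_right sc_mult_left)
  also have "\<dots> = (\<Sum>\<mu>\<in>words L. sc (complex_of_real ((cmod (wcoeff v \<mu>))\<^sup>2)) 1)"
    by (rule sum.cong) (use adj_s_word_mult_wspan[OF assms] in \<open>simp_all add: sc_sc mult.commute flip: complex_norm_square\<close>)
  also have "\<dots> = sc (complex_of_real (\<Sum>\<mu>\<in>words L. (cmod (wcoeff v \<mu>))\<^sup>2)) 1"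
    by (simp add: sc_sum_left)
  finally show ?thesis .
qed

lemma norm_wspan_sq: assumes "v \<in> wspan L" shows "(norm v)\<^sup>2 = (\<Sum>\<mu>\<in>words L. (cmod (wcoeff v \<mu>))\<^sup>2)"
proof -
  have "(norm v)\<^sup>2 = norm (st v * v)" by (simp add: cstar_id)
  also have "\<dots> = \<bar>\<Sum>\<mu>\<in>words L. (cmod (wcoeff v \<mu>))\<^sup>2\<bar>"
    unfolding adj_mult_self_wspan_coeffs[OF assms] norm_sc norm_of_real by simp
  also have "\<dots> = (\<Sum>\<mu>\<in>words L. (cmod (wcoeff v \<mu>))\<^sup>2)" by (intro abs_of_nonneg sum_nonneg) auto
  finally show ?thesis .
qed

lemma adj_mult_self_wspan: assumes "v \<in> wspan L"
  shows "st v * v = sc (complex_of_real ((norm v)\<^sup>2)) 1"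
  using adj_mult_self_wspan_coeffs[OF assms] norm_wspan_sq[OF assms] by simp

lemma wspan_mult: assumes "v \<in> wspan A" "w \<in> wspan B" shows "v * w \<in> wspan (A + B)"
proof -
  obtain a where a: "v = (\<Sum>\<mu>\<in>words A. sc (a \<mu>) (s_word \<mu>))" using assms(1) by (rule wspanE)
  obtain b where b: "w = (\<Sum>\<mu>\<in>words B. sc (b \<mu>) (s_word \<mu>))" using assms(2) by (rule wspanE)
  have "v * w = (\<Sum>\<mu>\<in>words A. \<Sum>\<nu>\<in>words B. sc (a \<mu> * b \<nu>) (s_word (\<mu> @ \<nu>)))"
    unfolding a b sum_product sc_mult_sc s_word_append ..
  also have "\<dots> \<in> wspan (A + B)"
    by (intro wspan_sum wspan_sc s_word_mem_wspan append_mem_words) auto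
  finally show ?thesis .
qed

lemma adj_s_word_mult_s_word_mem:
  assumes "\<mu> \<in> words A" "\<gamma> \<in> words (A + B)" shows "st (s_word \<mu>) * s_word \<gamma> \<in> wspan B"
proof -
  have sets: "set \<mu> \<subseteq> {..<n}" "set \<gamma> \<subseteq> {..<n}" and len: "length \<mu> = A" "length \<gamma> = A + B"
    using assms unfolding words_def by auto
  show ?thesis
  proof (cases "\<exists>r. \<gamma> = \<mu> @ r")
    case True
    hence "st (s_word \<mu>) * s_word \<gamma> = s_word (drop (length \<mu>) \<gamma>)"
      using adj_s_word_mult_s_word[OF sets] by simp
    moreover have "drop (length \<mu>) \<gamma> \<in> words B" using sets len unfolding words_def
      by (auto dest: in_set_dropD)
    ultimately show ?thesis by (simp add: s_word_mem_wspan)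
  next
    case False
    have "\<not> (\<exists>r. \<mu> = \<gamma> @ r)"
    proof
      assume "\<exists>r. \<mu> = \<gamma> @ r"
      then obtain r where r: "\<mu> = \<gamma> @ r" by blast
      hence "r = []" using len by simp
      thus False using False r by simp
    qed
    hence "st (s_word \<mu>) * s_word \<gamma> = 0" using adj_s_word_mult_s_word[OF sets] False by simp
    thus ?thesis by simp
  qed
qed

lemma adj_mult_wspan: assumes "u \<in> wspan A" "w \<in> wspan (A + B)" shows "st u * w \<in> wspan B"
proof -
  obtain a where a: "u = (\<Sum>\<mu>\<in>words A. sc (a \<mu>) (s_word \<mu>))" using assms(1) by (rule wspanE)
  obtain b where b: "w = (\<Sum>\<mu>\<in>words (A + B). sc (b \<mu>) (s_word \<mu>))" using assms(2) by (rule wspanE)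
  have "st u * w = (\<Sum>\<mu>\<in>words A. \<Sum>\<gamma>\<in>words (A + B). sc (cnj (a \<mu>) * b \<gamma>) (st (s_word \<mu>) * s_word \<gamma>))"
    unfolding a b st_sum st_sc sum_product sc_mult_sc ..
  also have "\<dots> \<in> wspan B"
    by (intro wspan_sum wspan_sc adj_s_word_mult_s_word_mem) auto
  finally show ?thesis .
qed

definition level_map :: "'a \<Rightarrow> nat \<Rightarrow> nat \<Rightarrow> bool" where
  "level_map b M L \<longleftrightarrow> (\<forall>\<alpha>\<in>words L. b * s_word \<alpha> \<in> wspan M)"

lemma level_mapD: "level_map b M L \<Longrightarrow> \<alpha> \<in> words L \<Longrightarrow> b * s_word \<alpha> \<in> wspan M" unfolding level_map_def
  by blast

lemma level_map_zero: "level_map 0 M L" unfolding level_map_def by simp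
lemma level_map_add: "level_map a M L \<Longrightarrow> level_map b M L \<Longrightarrow> level_map (a + b) M L"
  unfolding level_map_def by (simp add: distrib_right wspan_add)
lemma level_map_sc: "level_map a M L \<Longrightarrow> level_map (sc c a) M L"
  unfolding level_map_def by (simp add: sc_mult_left wspan_sc)

lemma level_map_wspan: assumes "level_map a M K" "w \<in> wspan K" shows "a * w \<in> wspan M"
proof -
  obtain c where c: "w = (\<Sum>\<mu>\<in>words K. sc (c \<mu>) (s_word \<mu>))" using assms(2) by (rule wspanE)
  have "a * w = (\<Sum>\<mu>\<in>words K. sc (c \<mu>) (a * s_word \<mu>))" unfolding c
    by (simp add: sum_distrib_left sc_mult_right)
  also have "\<dots> \<in> wspan M" by (intro wspan_sum wspan_sc level_mapD[OF assms(1)]) auto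
  finally show ?thesis .
qed

lemma level_map_mult: "level_map a M K \<Longrightarrow> level_map b K L \<Longrightarrow> level_map (a * b) M L"
  unfolding level_map_def by (simp add: mult.assoc level_map_wspan[unfolded level_map_def])

lemma level_map_wspan_elem: "v \<in> wspan L \<Longrightarrow> level_map v (L + K) K"
  unfolding level_map_def by (auto intro: wspan_mult s_word_mem_wspan)

lemma level_map_adj_wspan_elem: "u \<in> wspan A \<Longrightarrow> level_map (st u) K (A + K)"
  unfolding level_map_def by (auto intro: adj_mult_wspan s_word_mem_wspan)

lemma level_map_shift: assumes "level_map b M L" shows "level_map b (M + r) (L + r)"
  unfolding level_map_def
proof
  fix \<gamma> assume g: "\<gamma> \<in> words (L + r)"
  have "b * s_word \<gamma> = (b * s_word (take L \<gamma>)) * s_word (drop L \<gamma>)"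
    by (simp add: mult.assoc s_word_append[symmetric])
  also have "\<dots> \<in> wspan (M + r)"
    using take_drop_mem_words[OF g] by (intro wspan_mult level_mapD[OF assms] s_word_mem_wspan) auto
  finally show "b * s_word \<gamma> \<in> wspan (M + r)" .
qed

lemma level_map_shift_le: "level_map b (L + k) L \<Longrightarrow> L \<le> L' \<Longrightarrow> level_map b (L' + k) L'"
  using level_map_shift[of b "L + k" L "L' - L"] by (simp add: algebra_simps)

lemma level_map_s_word_mult_adj:
  assumes "\<mu> \<in> words M" "\<nu> \<in> words L"
  shows "level_map (s_word \<mu> * st (s_word \<nu>)) M L"
  unfolding level_map_def
proof
  fix \<alpha> assume "\<alpha> \<in> words L"
  hence "s_word \<mu> * st (s_word \<nu>) * s_word \<alpha> = (if \<nu> = \<alpha> then s_word \<mu> else 0)"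
    using s_word_orth[OF assms(2)] by (simp add: mult.assoc)
  thus "s_word \<mu> * st (s_word \<nu>) * s_word \<alpha> \<in> wspan M" using s_word_mem_wspan[OF assms(1)] by simp
qed

lemma adj_s_word_mult_adj_level_map:
  assumes "level_map b M L" "\<mu> \<in> words M" "\<alpha> \<in> words L"
  shows "st (s_word \<alpha>) * (st b * s_word \<mu>) = sc (cnj (wcoeff (b * s_word \<alpha>) \<mu>)) 1"
proof -
  have "st (s_word \<alpha>) * (st b * s_word \<mu>) = st (st (s_word \<mu>) * (b * s_word \<alpha>))"
    by (simp add: st_mult mult.assoc)
  also have "st (s_word \<mu>) * (b * s_word \<alpha>) = sc (wcoeff (b * s_word \<alpha>) \<mu>) 1"
    by (rule adj_s_word_mult_wspan[OF level_mapD[OF assms(1,3)] assms(2)])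
  finally show ?thesis by (simp add: st_sc)
qed

lemma level_map_adj: assumes "level_map b M L" shows "level_map (st b) L M"
  unfolding level_map_def
proof
  fix \<mu> assume m: "\<mu> \<in> words M"
  have "st b * s_word \<mu> = (\<Sum>\<alpha>\<in>words L. s_word \<alpha> * (st (s_word \<alpha>) * (st b * s_word \<mu>)))"
    by (rule expand_words)
  also have "\<dots> = (\<Sum>\<alpha>\<in>words L. sc (cnj (wcoeff (b * s_word \<alpha>) \<mu>)) (s_word \<alpha>))"
    by (rule sum.cong) (use adj_s_word_mult_adj_level_map[OF assms m] in \<open>auto simp: sc_mult_right\<close>)
  also have "\<dots> \<in> wspan L" by (intro wspan_sum wspan_sc s_word_mem_wspan) auto
  finally show "st b * s_word \<mu> \<in> wspan L" .
qed

definition hs_norm :: "'a \<Rightarrow> nat \<Rightarrow> real" where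
  "hs_norm b L = (\<Sum>\<alpha>\<in>words L. (norm (b * s_word \<alpha>))\<^sup>2)"

lemma hs_norm_nonneg: "hs_norm b L \<ge> 0" unfolding hs_norm_def by (intro sum_nonneg) auto

lemma hs_norm_adj: assumes "level_map b M L" shows "hs_norm (st b) M = hs_norm b L"
proof -
  have "hs_norm b L = (\<Sum>\<alpha>\<in>words L. \<Sum>\<mu>\<in>words M. (cmod (wcoeff (b * s_word \<alpha>) \<mu>))\<^sup>2)"
    unfolding hs_norm_def by (rule sum.cong) (auto intro: norm_wspan_sq level_mapD[OF assms])
  also have "\<dots> = (\<Sum>\<mu>\<in>words M. \<Sum>\<alpha>\<in>words L. (cmod (wcoeff (b * s_word \<alpha>) \<mu>))\<^sup>2)" by (rule sum.swap)
  also have "\<dots> = (\<Sum>\<mu>\<in>words M. \<Sum>\<alpha>\<in>words L. (cmod (wcoeff (st b * s_word \<mu>) \<alpha>))\<^sup>2)"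
  proof (intro sum.cong refl)
    fix \<mu> \<alpha> assume m: "\<mu> \<in> words M" and a: "\<alpha> \<in> words L"
    have "sc (wcoeff (st b * s_word \<mu>) \<alpha>) 1 = sc (cnj (wcoeff (b * s_word \<alpha>) \<mu>)) (1::'a)"
      using adj_s_word_mult_wspan[OF level_mapD[OF level_map_adj[OF assms] m] a] adj_s_word_mult_adj_level_map[OF assms m a] by simp
    hence "wcoeff (st b * s_word \<mu>) \<alpha> = cnj (wcoeff (b * s_word \<alpha>) \<mu>)" by (rule sc_one_inj)
    thus "(cmod (wcoeff (b * s_word \<alpha>) \<mu>))\<^sup>2 = (cmod (wcoeff (st b * s_word \<mu>) \<alpha>))\<^sup>2" by simp
  qed
  also have "\<dots> = hs_norm (st b) M"
    unfolding hs_norm_def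
      by (rule sum.cong) (auto intro: norm_wspan_sq[symmetric] level_mapD[OF level_map_adj[OF assms]])
  finally show ?thesis by simp
qed

lemma hs_norm_mult_left_le:
  assumes "norm w \<le> 1"
  shows "hs_norm (w * b) L \<le> hs_norm b L"
  unfolding hs_norm_def
proof (rule sum_mono)
  fix \<alpha>
  have "norm (w * b * s_word \<alpha>) \<le> norm w * norm (b * s_word \<alpha>)" by (metis mult.assoc norm_mult_ineq)
  also have "\<dots> \<le> norm (b * s_word \<alpha>)" using assms by (simp add: mult_left_le_one_le)
  finally show "(norm (w * b * s_word \<alpha>))\<^sup>2 \<le> (norm (b * s_word \<alpha>))\<^sup>2" by (simp add: power_mono)
qed

section \<open>The averaging maps and the state \<open>tau\<close>\<close>

definition Phi :: "nat \<Rightarrow> 'a \<Rightarrow> 'a" where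
  "Phi m x = sc (complex_of_real (1 / real n ^ m)) (\<Sum>\<alpha>\<in>words m. st (s_word \<alpha>) * x * s_word \<alpha>)"

lemma n_pos: "real n > 0" using n2 by simp

lemma Phi_add: "Phi (a + b) x = Phi b (Phi a x)"
proof -
  have "(\<Sum>\<gamma>\<in>words (a + b). st (s_word \<gamma>) * x * s_word \<gamma>)
      = (\<Sum>\<mu>\<in>words a. \<Sum>\<nu>\<in>words b. st (s_word \<nu>) * (st (s_word \<mu>) * x * s_word \<mu>) * s_word \<nu>)"
    by (simp add: sum_words_add s_word_append st_mult mult.assoc)
  also have "\<dots> = (\<Sum>\<nu>\<in>words b. st (s_word \<nu>) * (\<Sum>\<mu>\<in>words a. st (s_word \<mu>) * x * s_word \<mu>) * s_word \<nu>)"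
    by (subst sum.swap) (simp add: sum_distrib_left sum_distrib_right)
  finally have e: "(\<Sum>\<gamma>\<in>words (a + b). st (s_word \<gamma>) * x * s_word \<gamma>) = \<dots>" .
  define ca where "ca = complex_of_real (1 / real n ^ a)"
  define cb where "cb = complex_of_real (1 / real n ^ b)"
  define S where "S = (\<Sum>\<mu>\<in>words a. st (s_word \<mu>) * x * s_word \<mu>)"
  have "Phi b (Phi a x) = sc cb (\<Sum>\<nu>\<in>words b. st (s_word \<nu>) * sc ca S * s_word \<nu>)"
    unfolding Phi_def ca_def cb_def S_def ..
  also have "\<dots> = sc cb (\<Sum>\<nu>\<in>words b. sc ca (st (s_word \<nu>) * S * s_word \<nu>))"
    by (simp only: sc_mult_left sc_mult_right)
  also have "\<dots> = sc (cb * ca) (\<Sum>\<nu>\<in>words b. st (s_word \<nu>) * S * s_word \<nu>)"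
    by (simp only: sc_sum_right[symmetric] sc_sc)
  also have "cb * ca = complex_of_real (1 / real n ^ (a + b))" unfolding ca_def cb_def
    by (simp add: power_add)
  also have "(\<Sum>\<nu>\<in>words b. st (s_word \<nu>) * S * s_word \<nu>) = (\<Sum>\<gamma>\<in>words (a + b). st (s_word \<gamma>) * x * s_word \<gamma>)"
    unfolding e S_def ..
  finally show ?thesis unfolding Phi_def by simp
qed

lemma Phi_scalar: "Phi m (sc c 1) = sc c 1"
proof -
  have "(\<Sum>\<alpha>\<in>words m. st (s_word \<alpha>) * sc c 1 * s_word \<alpha>) = (\<Sum>\<alpha>\<in>words m. sc c 1)"
    by (rule sum.cong) (auto simp: sc_mult_right sc_mult_left s_word_orth)
  also have "\<dots> = sc (\<Sum>\<alpha>\<in>words m. c) 1" by (rule sc_sum_left[symmetric])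
  also have "(\<Sum>\<alpha>\<in>words m. c) = c * of_nat (n ^ m)" by (simp add: card_words)
  finally show ?thesis unfolding Phi_def using n_pos by (simp add: sc_sc)
qed

lemma norm_Phi_le: "norm (Phi m x) \<le> norm x"
proof -
  have "norm (\<Sum>\<alpha>\<in>words m. st (s_word \<alpha>) * x * s_word \<alpha>) \<le> (\<Sum>\<alpha>\<in>words m. norm x)"
  proof (rule sum_norm_le)
    fix \<alpha> assume "\<alpha> \<in> words m"
    hence "norm (st (s_word \<alpha>) * x * s_word \<alpha>) \<le> 1 * norm x * 1"
      using norm_mult3_le[of "st (s_word \<alpha>)" x "s_word \<alpha>"] norm_s_word_words by simp
    thus "norm (st (s_word \<alpha>) * x * s_word \<alpha>) \<le> norm x" by simp
  qed
  also have "\<dots> = real n ^ m * norm x" by (simp add: card_words)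
  finally show ?thesis unfolding Phi_def norm_sc norm_of_real using n_pos by (simp add: field_simps)
qed

lemma Phi_diff: "Phi m (x - y) = Phi m x - Phi m y"
  unfolding Phi_def by (simp add: algebra_simps sum_subtractf sc_diff_right)

lemma Phi_lipschitz: "norm (Phi m x - Phi m y) \<le> norm (x - y)"
  using norm_Phi_le[of m "x - y"] by (simp add: Phi_diff)

text \<open>\<open>tau x\<close> is meaningful only for \<open>x \<in> tau_dom\<close>.\<close>

definition tau_dom :: "'a set" where "tau_dom = {x. \<exists>c. (\<lambda>m. Phi m x) \<longlonglongrightarrow> sc c 1}"
definition tau :: "'a \<Rightarrow> complex" where "tau x = (THE c. (\<lambda>m. Phi m x) \<longlonglongrightarrow> sc c 1)"

lemma tau_eqI: "(\<lambda>m. Phi m x) \<longlonglongrightarrow> sc c 1 \<Longrightarrow> tau x = c"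
  unfolding tau_def
proof (rule the_equality)
  fix d assume "(\<lambda>m. Phi m x) \<longlonglongrightarrow> sc c 1" "(\<lambda>m. Phi m x) \<longlonglongrightarrow> sc d 1"
  hence "sc d 1 = sc c (1::'a)" using LIMSEQ_unique by blast
  thus "d = c" by (rule sc_one_inj)
qed

lemma tau_tendsto: "x \<in> tau_dom \<Longrightarrow> (\<lambda>m. Phi m x) \<longlonglongrightarrow> sc (tau x) 1"
  unfolding tau_dom_def using tau_eqI by blast

lemma tau_eventually_const: assumes "Phi L x = sc c 1" shows "x \<in> tau_dom" "tau x = c"
proof -
  have "Phi m x = sc c 1" if "m \<ge> L" for m
  proof -
    have "Phi m x = Phi (L + (m - L)) x" using that by simp
    also have "\<dots> = sc c 1" by (simp only: Phi_add assms Phi_scalar)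
    finally show ?thesis .
  qed
  hence lim: "(\<lambda>m. Phi m x) \<longlonglongrightarrow> sc c 1"
    by (intro tendsto_eventually) (auto simp: eventually_sequentially)
  thus "x \<in> tau_dom" unfolding tau_dom_def by blast
  show "tau x = c" by (rule tau_eqI[OF lim])
qed

lemma tau_scalar: "sc c 1 \<in> tau_dom" "tau (sc c 1) = c"
  using tau_eventually_const[OF Phi_scalar[of 0]] by auto

lemma tau_lipschitz: "1-lipschitz_on tau_dom tau"
proof (rule lipschitz_onI)
  fix x y assume xy: "x \<in> tau_dom" "y \<in> tau_dom"
  have "(\<lambda>m. norm (Phi m x - Phi m y)) \<longlonglongrightarrow> norm (sc (tau x) 1 - sc (tau y) (1::'a))"
    by (intro tendsto_intros tau_tendsto xy)
  hence "norm (sc (tau x) 1 - sc (tau y) (1::'a)) \<le> norm (x - y)"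
    by (rule Lim_bounded) (simp add: Phi_lipschitz)
  thus "dist (tau x) (tau y) \<le> 1 * dist x y" by (simp add: dist_norm sc_diff_left[symmetric])
qed simp

lemma tau_closed:
  assumes dom: "\<And>j. a j \<in> tau_dom" and lim: "a \<longlonglongrightarrow> x"
  shows "x \<in> tau_dom" "(\<lambda>j. tau (a j)) \<longlonglongrightarrow> tau x"
proof -
  have "Cauchy (\<lambda>j. tau (a j))"
    using lipschitz_on_uniformly_continuous[OF tau_lipschitz] LIMSEQ_imp_Cauchy[OF lim] dom
    by (rule uniformly_continuous_on_Cauchy)
  then obtain c where c: "(\<lambda>j. tau (a j)) \<longlonglongrightarrow> c" using Cauchy_convergent_iff convergent_def by blast
  have "(\<lambda>m. Phi m x) \<longlonglongrightarrow> sc c 1"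
  proof (rule LIMSEQ_I)
    fix e :: real assume e: "e > 0"
    have "\<forall>\<^sub>F j in sequentially. dist (a j) x < e/3 \<and> dist (tau (a j)) c < e/3"
      using e by (intro eventually_conj tendstoD[OF lim] tendstoD[OF c]) auto
    then obtain j where j: "norm (x - a j) < e/3" "cmod (tau (a j) - c) < e/3"
      using eventually_happens'[OF sequentially_bot] by (auto simp: dist_norm norm_minus_commute)
    obtain M where M: "\<And>m. m \<ge> M \<Longrightarrow> norm (Phi m (a j) - sc (tau (a j)) 1) < e/3"
      using LIMSEQ_D[OF tau_tendsto[OF dom], of "e/3"] e by auto
    have "norm (Phi m x - sc c 1) < e" if "m \<ge> M" for m
    proof -
      have "norm (Phi m x - sc (tau (a j)) 1) < e/3 + e/3"
        using Phi_lipschitz[of m x "a j"] j(1) M[OF that] by (intro norm_diff_triangle_less) auto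
      moreover have "norm (sc (tau (a j)) 1 - sc c (1::'a)) < e/3"
        using j(2) by (simp add: sc_diff_left[symmetric])
      ultimately show ?thesis using norm_diff_triangle_less by fastforce
    qed
    thus "\<exists>M. \<forall>m\<ge>M. norm (Phi m x - sc c 1) < e" by blast
  qed
  thus "x \<in> tau_dom" unfolding tau_dom_def by blast
  have "tau x = c" by (rule tau_eqI) fact
  thus "(\<lambda>j. tau (a j)) \<longlonglongrightarrow> tau x" using c by simp
qed

lemma tau_adj_mult_level_map: assumes "level_map b M L"
  shows "st b * b \<in> tau_dom" "tau (st b * b) = complex_of_real (hs_norm b L / real n ^ L)"
proof -
  have "(\<Sum>\<alpha>\<in>words L. st (s_word \<alpha>) * (st b * b) * s_word \<alpha>) = (\<Sum>\<alpha>\<in>words L. sc (complex_of_real ((norm (b * s_word \<alpha>))\<^sup>2)) 1)"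
  proof (rule sum.cong)
    fix \<alpha> assume a: "\<alpha> \<in> words L"
    have "st (s_word \<alpha>) * (st b * b) * s_word \<alpha> = st (b * s_word \<alpha>) * (b * s_word \<alpha>)"
      by (simp add: st_mult mult.assoc)
    also have "\<dots> = sc (complex_of_real ((norm (b * s_word \<alpha>))\<^sup>2)) 1"
      by (rule adj_mult_self_wspan[OF level_mapD[OF assms a]])
    finally show "st (s_word \<alpha>) * (st b * b) * s_word \<alpha> = sc (complex_of_real ((norm (b * s_word \<alpha>))\<^sup>2)) 1" .
  qed simp
  also have "\<dots> = sc (complex_of_real (hs_norm b L)) 1" unfolding hs_norm_def
    by (simp add: sc_sum_left)
  finally have "Phi L (st b * b) = sc (complex_of_real (hs_norm b L / real n ^ L)) 1"
    unfolding Phi_def by (simp add: sc_sc)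
  thus "st b * b \<in> tau_dom" "tau (st b * b) = complex_of_real (hs_norm b L / real n ^ L)"
    by (rule tau_eventually_const)+
qed

lemma norm_le_sum_words: "norm a \<le> (\<Sum>\<alpha>\<in>words L. norm (a * s_word \<alpha>))"
proof -
  have "a = (\<Sum>\<alpha>\<in>words L. (a * s_word \<alpha>) * st (s_word \<alpha>))"
    using sum_range_projs_words[of L]
      by (metis (no_types, lifting) mult.assoc mult_1_right sum.cong sum_distrib_left)
  hence "norm a = norm (\<Sum>\<alpha>\<in>words L. (a * s_word \<alpha>) * st (s_word \<alpha>))" by simp
  also have "\<dots> \<le> (\<Sum>\<alpha>\<in>words L. norm (a * s_word \<alpha>))"
  proof (rule sum_norm_le)
    fix \<alpha> assume "\<alpha> \<in> words L"
    thus "norm (a * s_word \<alpha> * st (s_word \<alpha>)) \<le> norm (a * s_word \<alpha>)"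
      using norm_mult_ineq[of "a * s_word \<alpha>" "st (s_word \<alpha>)"] norm_s_word_words by simp
  qed
  finally show ?thesis .
qed

lemma exists_unit_wspan: "\<exists>u. u \<in> wspan L \<and> norm u = 1"
proof -
  have "replicate L 0 \<in> words L" using n2 unfolding words_def by auto
  thus ?thesis using s_word_mem_wspan norm_s_word_words by blast
qed

text \<open>The norm of an element of finite level is detected on the finite-dimensional space
  \<open>wspan L\<close>: iterating \<open>q\<^sup>* q\<close> on \<open>wspan L\<close> bounds the norms of its powers, and the norm of a
  self-adjoint element is recovered from the norms of its powers.\<close>

lemma norm_power_adj_mult_le:
  assumes q: "level_map q M L" and K: "K \<ge> 0"
    and hom: "\<And>v. v \<in> wspan L \<Longrightarrow> norm (q * v) \<le> K * norm v"
  shows "norm ((st q * q) ^ m) \<le> real n ^ L * (norm q * K) ^ m"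
proof -
  define r where "r = st q * q"
  have lr: "level_map r L L" unfolding r_def by (rule level_map_mult[OF level_map_adj[OF q] q])
  have pw: "r ^ m * w \<in> wspan L \<and> norm (r ^ m * w) \<le> (norm q * K) ^ m * norm w"
    if w: "w \<in> wspan L" for m w
  proof (induction m)
    case (Suc m)
    have inV: "r ^ m * w \<in> wspan L" using Suc by simp
    have "norm (st q * (q * (r ^ m * w))) \<le> norm q * (K * norm (r ^ m * w))"
      using norm_mult_ineq[of "st q" "q * (r ^ m * w)"] hom[OF inV]
        by (simp add: order_trans mult_left_mono)
    also have "\<dots> \<le> norm q * (K * ((norm q * K) ^ m * norm w))"
      using Suc K by (intro mult_left_mono) auto
    finally show ?case
      using level_map_wspan[OF lr inV] unfolding r_def by (simp add: mult.assoc algebra_simps)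
  qed (use w in simp)
  have "norm (r ^ m) \<le> (\<Sum>\<alpha>\<in>words L. norm (r ^ m * s_word \<alpha>))" by (rule norm_le_sum_words)
  also have "\<dots> \<le> (\<Sum>\<alpha>\<in>words L. (norm q * K) ^ m)"
    by (rule sum_mono) (use pw s_word_mem_wspan norm_s_word_words in force)
  also have "\<dots> = real n ^ L * (norm q * K) ^ m" by (simp add: card_words)
  finally show ?thesis unfolding r_def .
qed

lemma level_map_norm_le:
  assumes q: "level_map q M L" and hom: "\<And>v. v \<in> wspan L \<Longrightarrow> norm (q * v) \<le> K * norm v"
  shows "norm q \<le> K"
proof (rule ccontr)
  assume "\<not> ?thesis"
  hence Kq: "K < norm q" by simp
  obtain u where "u \<in> wspan L" "norm u = 1" using exists_unit_wspan by blast
  hence "norm (q * u) \<le> K" using hom[of u] by simp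
  hence K0: "K \<ge> 0" by (rule order_trans[OF norm_ge_zero])
  have bound: "norm q ^ (2 ^ j) \<le> real n ^ L * K ^ (2 ^ j)" for j
  proof -
    let ?c = "norm q ^ (2 ^ j)"
    have "norm ((st q * q) ^ (2 ^ j)) = ?c * ?c"
      using norm_selfadj_power2[of "st q * q" j] cstar_id[of q]
      by (simp add: st_mult power2_eq_square power_mult_distrib)
    hence "?c * ?c \<le> (real n ^ L * K ^ (2 ^ j)) * ?c"
      using norm_power_adj_mult_le[OF q K0 hom, of "2 ^ j"]
        by (simp add: power_mult_distrib algebra_simps)
    moreover have "?c > 0" using Kq K0 by (intro zero_less_power) linarith
    ultimately show ?thesis by simp
  qed
  have Kq1: "K / norm q < 1" using Kq K0 by (simp add: divide_less_eq_1)
  then obtain j where j: "(K / norm q) ^ j < 1 / real n ^ L"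
    using real_arch_pow_inv[of "1 / real n ^ L" "K / norm q"] n2 by auto
  have "(K / norm q) ^ (2 ^ j) \<le> (K / norm q) ^ j"
    using Kq1 K0 less_exp[of j] by (intro power_decreasing) auto
  moreover have "1 / real n ^ L \<le> (K / norm q) ^ (2 ^ j)"
  proof -
    have "0 < norm q ^ (2 ^ j)" "0 < real n ^ L" using Kq K0 n2
      by (intro zero_less_power; linarith)+
    thus ?thesis using bound[of j] by (simp add: power_divide divide_simps mult.commute)
  qed
  ultimately show False using j by simp
qed

lemma level_map_norm_attained:
  assumes q: "level_map q M L" and e: "e > 0"
  obtains v where "v \<in> wspan L" "norm v = 1" "norm q - e \<le> norm (q * v)"
proof -
  have "\<exists>v. v \<in> wspan L \<and> norm v = 1 \<and> norm q - e \<le> norm (q * v)"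
  proof (rule ccontr)
    assume "\<not> ?thesis"
    hence H: "\<And>v. v \<in> wspan L \<Longrightarrow> norm v = 1 \<Longrightarrow> norm (q * v) \<le> norm q - e" by force
    have "norm (q * v) \<le> (norm q - e) * norm v" if v: "v \<in> wspan L" for v
    proof (cases "v = 0")
      case False
      define v' where "v' = sc (complex_of_real (1 / norm v)) v"
      have "norm (q * v) = norm v * norm (q * v')"
        unfolding v'_def using False by (simp add: sc_mult_right norm_sc norm_divide)
      also have "\<dots> \<le> norm v * (norm q - e)"
        using False
          by (intro mult_left_mono H) (auto simp: v'_def wspan_sc[OF v] norm_sc norm_divide)
      finally show ?thesis by (simp add: mult.commute)
    qed simp
    hence "norm q \<le> norm q - e" by (rule level_map_norm_le[OF q])
    thus False using e by simp
  qed
  thus thesis using that by blast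
qed

section \<open>Polynomials in the generators\<close>

inductive_set Pol :: "'a set" where
  gen: "set \<mu> \<subseteq> {..<n} \<Longrightarrow> set \<nu> \<subseteq> {..<n} \<Longrightarrow> s_word \<mu> * st (s_word \<nu>) \<in> Pol"
| add: "a \<in> Pol \<Longrightarrow> b \<in> Pol \<Longrightarrow> a + b \<in> Pol"
| scl: "a \<in> Pol \<Longrightarrow> sc c a \<in> Pol"

lemma Pol_zero: "0 \<in> Pol" using Pol.scl[OF Pol.gen[of "[]" "[]"], of 0] by simp
lemma Pol_one: "1 \<in> Pol" using Pol.gen[of "[]" "[]"] by simp
lemma Pol_s: "i < n \<Longrightarrow> s i \<in> Pol" using Pol.gen[of "[i]" "[]"] by simp

lemma Pol_st: "a \<in> Pol \<Longrightarrow> st a \<in> Pol"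
proof (induction rule: Pol.induct)
  case (gen \<mu> \<nu>) thus ?case using Pol.gen[of \<nu> \<mu>] by (simp add: st_mult)
next
  case (add a b) thus ?case by (simp add: st_add Pol.add)
next
  case (scl a c) thus ?case by (simp add: st_sc Pol.scl)
qed

lemma Pol_gen_mult:
  assumes "set \<mu> \<subseteq> {..<n}" "set \<nu> \<subseteq> {..<n}" "set \<alpha> \<subseteq> {..<n}" "set \<beta> \<subseteq> {..<n}"
  shows "(s_word \<mu> * st (s_word \<nu>)) * (s_word \<alpha> * st (s_word \<beta>)) \<in> Pol"
proof -
  have e: "(s_word \<mu> * st (s_word \<nu>)) * (s_word \<alpha> * st (s_word \<beta>)) = s_word \<mu> * (st (s_word \<nu>) * s_word \<alpha>) * st (s_word \<beta>)"
    by (simp add: mult.assoc)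
  show ?thesis
  proof (cases "\<exists>r. \<alpha> = \<nu> @ r")
    case True
    hence "st (s_word \<nu>) * s_word \<alpha> = s_word (drop (length \<nu>) \<alpha>)"
      using adj_s_word_mult_s_word[OF assms(2,3)] by simp
    hence "(s_word \<mu> * st (s_word \<nu>)) * (s_word \<alpha> * st (s_word \<beta>)) = s_word (\<mu> @ drop (length \<nu>) \<alpha>) * st (s_word \<beta>)"
      unfolding e by (simp add: s_word_append)
    moreover have "set (\<mu> @ drop (length \<nu>) \<alpha>) \<subseteq> {..<n}" using assms by (auto dest: in_set_dropD)
    ultimately show ?thesis using Pol.gen assms(4) by simp
  next
    case F1: False
    show ?thesis
    proof (cases "\<exists>r. \<nu> = \<alpha> @ r")
      case True
      hence "st (s_word \<nu>) * s_word \<alpha> = st (s_word (drop (length \<alpha>) \<nu>))"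
        using adj_s_word_mult_s_word[OF assms(2,3)] F1 by simp
      hence "(s_word \<mu> * st (s_word \<nu>)) * (s_word \<alpha> * st (s_word \<beta>)) = s_word \<mu> * st (s_word (\<beta> @ drop (length \<alpha>) \<nu>))"
        unfolding e by (simp add: s_word_append st_mult mult.assoc)
      moreover have "set (\<beta> @ drop (length \<alpha>) \<nu>) \<subseteq> {..<n}" using assms by (auto dest: in_set_dropD)
      ultimately show ?thesis using Pol.gen assms(1) by simp
    next
      case False
      hence "st (s_word \<nu>) * s_word \<alpha> = 0" using adj_s_word_mult_s_word[OF assms(2,3)] F1 by simp
      thus ?thesis unfolding e using Pol_zero by simp
    qed
  qed
qed

lemma Pol_mult: "a \<in> Pol \<Longrightarrow> b \<in> Pol \<Longrightarrow> a * b \<in> Pol"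
proof (induction a rule: Pol.induct)
  case (gen \<mu> \<nu>)
  note outer = gen.hyps
  from gen.prems show ?case
  proof (induction b rule: Pol.induct)
    case (gen \<alpha> \<beta>) thus ?case by (rule Pol_gen_mult[OF outer])
  next
    case (add a b) thus ?case by (simp add: distrib_left Pol.add)
  next
    case (scl a c) thus ?case by (simp add: sc_mult_right Pol.scl)
  qed
next
  case (add a b') thus ?case by (simp add: distrib_right Pol.add)
next
  case (scl a c) thus ?case by (simp add: sc_mult_left Pol.scl)
qed

lemma closure_Pol_closed_binary:
  assumes cont: "continuous_on UNIV (\<lambda>p. f (fst p) (snd p))"
    and Pol: "\<And>a b. a \<in> Pol \<Longrightarrow> b \<in> Pol \<Longrightarrow> f a b \<in> Pol"
    and xy: "x \<in> closure Pol" "y \<in> closure Pol"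
  shows "f x y \<in> closure Pol"
proof -
  have "(\<lambda>p. f (fst p) (snd p)) ` closure (Pol \<times> Pol) \<subseteq> closure Pol"
    using Pol by (intro image_closure_subset continuous_on_subset[OF cont])
      (auto intro!: closure_subset[THEN subsetD])
  moreover have "(x, y) \<in> closure (Pol \<times> Pol)" using xy by (simp add: closure_Times)
  ultimately show ?thesis by auto
qed

lemma cstar_gen_subset_closure_Pol: "cstar_gen sc st (s ` {..<n}) \<subseteq> closure Pol"
  unfolding cstar_gen_def
proof (rule Inter_lower, safe intro!: closed_closure)
  show "s i \<in> closure Pol" if "i < n" for i using Pol_s[OF that] closure_subset by blast
  show "1 \<in> closure Pol" using Pol_one closure_subset by blast
  fix x y assume xy: "x \<in> closure Pol" "y \<in> closure Pol"
  show "x + y \<in> closure Pol"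
    by (rule closure_Pol_closed_binary[OF _ Pol.add xy]) (intro continuous_intros)
  show "x * y \<in> closure Pol"
    by (rule closure_Pol_closed_binary[OF _ Pol_mult xy]) (intro continuous_intros)
  show "sc c x \<in> closure Pol" for c
    by (rule closure_Pol_closed_binary[of "\<lambda>a b. sc c a", OF _ _ xy])
      (auto intro: Pol.scl bounded_linear.continuous_on[OF bounded_linear_sc continuous_on_fst[OF continuous_on_id]])
  show "st x \<in> closure Pol"
    by (rule closure_Pol_closed_binary[of "\<lambda>a b. st a", OF _ _ xy])
      (auto intro: Pol_st bounded_linear.continuous_on[OF bounded_linear_st continuous_on_fst[OF continuous_on_id]])
qed

end

section \<open>The gauge action\<close>

locale cuntz_gauge = cuntz_family sc st s n
  for sc :: "complex \<Rightarrow> 'a::{real_normed_algebra_1,banach} \<Rightarrow> 'a" and st s n +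
  fixes \<omega> :: "complex \<Rightarrow> 'a \<Rightarrow> 'a"
  assumes generated: "cstar_gen sc st (s ` {..<n}) = UNIV"
    and gauge_hom: "cmod t = 1 \<Longrightarrow> star_hom sc st (\<omega> t)"
    and gauge_s: "cmod t = 1 \<Longrightarrow> i < n \<Longrightarrow> \<omega> t (s i) = sc t (s i)"
begin

lemma closure_Pol: "closure Pol = UNIV"
  using cstar_gen_subset_closure_Pol generated by auto

lemma gauge_s_word:
  assumes t: "cmod t = 1"
  shows "set \<mu> \<subseteq> {..<n} \<Longrightarrow> \<omega> t (s_word \<mu>) = sc (t ^ length \<mu>) (s_word \<mu>)"
proof (induction \<mu>)
  case (Cons i \<mu>)
  have "\<omega> t (s_word (i # \<mu>)) = \<omega> t (s i) * \<omega> t (s_word \<mu>)" using star_hom_mult[OF gauge_hom[OF t]]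
    by simp
  also have "\<dots> = sc t (s i) * sc (t ^ length \<mu>) (s_word \<mu>)" using Cons gauge_s[OF t] by simp
  finally show ?case by (simp add: sc_mult_sc)
qed (simp add: star_hom_one[OF gauge_hom[OF t]])

definition homogeneous :: "int \<Rightarrow> 'a \<Rightarrow> bool" where
  "homogeneous d y \<longleftrightarrow> (\<forall>t. cmod t = 1 \<longrightarrow> \<omega> t y = sc (t powi d) y)"

lemma homogeneous_adj: "homogeneous d x \<Longrightarrow> homogeneous (- d) (st x)"
  unfolding homogeneous_def
  by (simp add: star_hom_st[OF gauge_hom] st_sc cnj_unit power_int_minus power_int_inverse)

lemma homogeneous_s_word_mult_adj:
  assumes "set \<mu> \<subseteq> {..<n}" "set \<nu> \<subseteq> {..<n}"
  shows "homogeneous (int (length \<mu>) - int (length \<nu>)) (s_word \<mu> * st (s_word \<nu>))"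
  unfolding homogeneous_def
proof (intro allI impI)
  fix t :: complex assume t: "cmod t = 1"
  hence "t \<noteq> 0" by auto
  have "\<omega> t (s_word \<mu> * st (s_word \<nu>)) = \<omega> t (s_word \<mu>) * st (\<omega> t (s_word \<nu>))"
    by (simp add: star_hom_mult[OF gauge_hom[OF t]] star_hom_st[OF gauge_hom[OF t]])
  also have "\<dots> = sc (t ^ length \<mu> * inverse t ^ length \<nu>) (s_word \<mu> * st (s_word \<nu>))"
    using gauge_s_word[OF t assms(1)] gauge_s_word[OF t assms(2)] cnj_unit[OF t]
    by (simp add: st_sc sc_mult_sc)
  also have "t ^ length \<mu> * inverse t ^ length \<nu> = t powi (int (length \<mu>) - int (length \<nu>))"
    using \<open>t \<noteq> 0\<close> by (simp add: power_int_diff divide_inverse power_inverse)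
  finally show "\<omega> t (s_word \<mu> * st (s_word \<nu>))
      = sc (t powi (int (length \<mu>) - int (length \<nu>))) (s_word \<mu> * st (s_word \<nu>))" .
qed

text \<open>Averaging \<open>t\<^sup>-\<^sup>d \<omega>\<^sub>t\<close> over the \<open>m\<close>-th roots of unity \<open>t\<close>: a discrete version of the projection
  onto the spectral subspace of degree \<open>d\<close>, exact on degrees within distance \<open>m\<close> of \<open>d\<close>.\<close>

definition deg_avg :: "int \<Rightarrow> nat \<Rightarrow> 'a \<Rightarrow> 'a" where
  "deg_avg d m y = sc (1 / of_nat m)
     (\<Sum>j<m. sc ((cis (2*pi/m) ^ j) powi (- d)) (\<omega> (cis (2*pi/m) ^ j) y))"

lemma deg_avg_add: "deg_avg d m (x + y) = deg_avg d m x + deg_avg d m y"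
  unfolding deg_avg_def
  by (simp add: star_hom_add[OF gauge_hom[OF cmod_root_power]] sc_add_right sum.distrib)

lemma deg_avg_diff: "deg_avg d m (x - y) = deg_avg d m x - deg_avg d m y"
  unfolding deg_avg_def
  by (simp add: star_hom_diff[OF gauge_hom[OF cmod_root_power]] sc_diff_right sum_subtractf)

lemma deg_avg_sc: "deg_avg d m (sc c x) = sc c (deg_avg d m x)"
proof -
  have "\<omega> (cis (2*pi/m) ^ j) (sc c x) = sc c (\<omega> (cis (2*pi/m) ^ j) x)" for j
    by (rule star_hom_sc[OF gauge_hom[OF cmod_root_power]])
  thus ?thesis unfolding deg_avg_def by (simp add: sc_sum_right sc_sc mult.commute)
qed

lemma norm_deg_avg_le: "norm (deg_avg d m y) \<le> norm y"
proof -
  have "norm (\<Sum>j<m. sc ((cis (2*pi/m) ^ j) powi (- d)) (\<omega> (cis (2*pi/m) ^ j) y)) \<le> (\<Sum>j<m. norm y)"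
    using star_hom_norm_le[OF gauge_hom[OF cmod_root_power]]
    by (intro sum_norm_le) (simp add: norm_sc norm_power_int cmod_root_power)
  thus ?thesis unfolding deg_avg_def norm_sc
    by (cases "m = 0") (auto simp: norm_divide divide_le_eq mult.commute)
qed

lemma deg_avg_homogeneous:
  assumes y: "homogeneous e y" and em: "\<bar>e - d\<bar> < int m"
  shows "deg_avg d m y = (if e = d then y else 0)"
proof -
  define z where "z = cis (2*pi/m)"
  have m: "m > 0" using em by linarith
  have "(\<Sum>j<m. sc ((z ^ j) powi (- d)) (\<omega> (z ^ j) y)) = (\<Sum>j<m. sc ((z powi (e - d)) ^ j) y)"
  proof (rule sum.cong)
    fix j
    have "z ^ j \<noteq> 0" unfolding z_def by simp
    hence "(z ^ j) powi (- d) * (z ^ j) powi e = (z ^ j) powi (e - d)"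
      by (simp add: power_int_add[symmetric])
    also have "\<dots> = (z powi (e - d)) ^ j"
      by (simp add: power_int_power power_int_power' mult.commute)
    finally have "(z ^ j) powi (- d) * (z ^ j) powi e = (z powi (e - d)) ^ j" .
    thus "sc ((z ^ j) powi (- d)) (\<omega> (z ^ j) y) = sc ((z powi (e - d)) ^ j) y"
      using y cmod_root_power unfolding homogeneous_def z_def by (simp add: sc_sc)
  qed simp
  also have "\<dots> = sc (\<Sum>j<m. (z powi (e - d)) ^ j) y" by (rule sc_sum_left[symmetric])
  finally have avg: "deg_avg d m y = sc (1 / of_nat m) (sc (\<Sum>j<m. (z powi (e - d)) ^ j) y)"
    unfolding deg_avg_def z_def by (rule arg_cong[where f = "sc (1 / of_nat m)"])
  show ?thesis
  proof (cases "e = d")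
    case False
    have "\<not> int m dvd (e - d)"
      using em False dvd_imp_le_int[of "e - d" "int m"] by auto
    hence "(\<Sum>j<m. (z powi (e - d)) ^ j) = 0" unfolding z_def by (rule sum_roots_of_unity_powi[OF m])
    thus ?thesis unfolding avg using False by simp
  qed (use m in \<open>simp add: avg sc_sc\<close>)
qed

lemma Pol_deg_avg_level_map:
  "a \<in> Pol \<Longrightarrow> \<exists>B. \<forall>m\<ge>B. \<exists>L. level_map (deg_avg (int k) m a) (L + k) L"
proof (induction rule: Pol.induct)
  case (gen \<mu> \<nu>)
  define d where "d = int (length \<mu>) - int (length \<nu>)"
  have "\<exists>L. level_map (deg_avg (int k) m (s_word \<mu> * st (s_word \<nu>))) (L + k) L"
    if m: "m \<ge> length \<mu> + length \<nu> + k + 1" for m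
  proof -
    have "\<bar>d - int k\<bar> < int m" using m unfolding d_def by auto
    hence avg: "deg_avg (int k) m (s_word \<mu> * st (s_word \<nu>))
        = (if d = int k then s_word \<mu> * st (s_word \<nu>) else 0)"
      using deg_avg_homogeneous homogeneous_s_word_mult_adj[OF gen] unfolding d_def by blast
    show ?thesis
    proof (cases "d = int k")
      case True
      hence "\<mu> \<in> words (length \<nu> + k)" "\<nu> \<in> words (length \<nu>)"
        using gen unfolding d_def words_def by auto
      thus ?thesis using avg True level_map_s_word_mult_adj by (intro exI[of _ "length \<nu>"]) simp
    qed (use avg level_map_zero in auto)
  qed
  thus ?case by blast
next
  case (add a b)
  then obtain B1 B2 where
    B1: "\<forall>m\<ge>B1. \<exists>L. level_map (deg_avg (int k) m a) (L + k) L" and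
    B2: "\<forall>m\<ge>B2. \<exists>L. level_map (deg_avg (int k) m b) (L + k) L" by blast
  have "\<exists>L. level_map (deg_avg (int k) m (a + b)) (L + k) L" if m: "m \<ge> max B1 B2" for m
  proof -
    obtain L1 L2 where "level_map (deg_avg (int k) m a) (L1 + k) L1" "level_map (deg_avg (int k) m b) (L2 + k) L2"
      using B1[rule_format, of m] B2[rule_format, of m] m by auto
    hence "level_map (deg_avg (int k) m (a + b)) ((L1 + L2) + k) (L1 + L2)"
      unfolding deg_avg_add by (intro level_map_add) (auto elim: level_map_shift_le)
    thus ?thesis by blast
  qed
  thus ?case by blast
next
  case (scl a c)
  thus ?case by (metis deg_avg_sc level_map_sc)
qed

lemma homogeneous_level_approx:
  assumes x: "homogeneous (int k) x" and e: "e > 0"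
  obtains q L where "level_map q (L + k) L" "norm (x - q) < e"
proof -
  obtain a where a: "a \<in> Pol" "dist a x < e" using closure_Pol e closure_approachable by blast
  obtain B where B: "\<forall>m\<ge>B. \<exists>L. level_map (deg_avg (int k) m a) (L + k) L"
    using Pol_deg_avg_level_map[OF a(1)] by blast
  define m where "m = max B 1"
  obtain L where L: "level_map (deg_avg (int k) m a) (L + k) L" using B unfolding m_def by fastforce
  have "deg_avg (int k) m x = x" using deg_avg_homogeneous[OF x] m_def by simp
  hence "norm (x - deg_avg (int k) m a) = norm (deg_avg (int k) m (x - a))"
    by (simp add: deg_avg_diff)
  also have "\<dots> \<le> norm (x - a)" by (rule norm_deg_avg_le)
  also have "\<dots> < e" using a(2) by (simp add: dist_norm norm_minus_commute)
  finally show thesis using L that by blast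
qed

lemma homogeneous_level_seq:
  assumes x: "homogeneous (int k) x"
  obtains Q Lv where "\<And>j. level_map (Q j) (Lv j + k) (Lv j)" "Q \<longlonglongrightarrow> x"
proof -
  have "\<forall>j. \<exists>q L. level_map q (L + k) L \<and> norm (x - q) < inverse (real (Suc j))"
    by (metis homogeneous_level_approx[OF x] inverse_positive_iff_positive of_nat_0_less_iff zero_less_Suc)
  then obtain Q Lv where QL: "\<And>j. level_map (Q j) (Lv j + k) (Lv j)"
    "\<And>j. norm (x - Q j) < inverse (real (Suc j))" by metis
  have "(\<lambda>j. Q j - x) \<longlonglongrightarrow> 0"
    by (rule Lim_null_comparison[OF _ LIMSEQ_inverse_real_of_nat])
      (use QL(2) in \<open>auto simp: norm_minus_commute less_imp_le\<close>)
  hence "Q \<longlonglongrightarrow> x" by (simp add: LIM_zero_iff)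
  with QL(1) show thesis by (rule that)
qed

section \<open>Normal elements of nonzero degree\<close>

lemma tau_adj_homogeneous:
  assumes x: "homogeneous (int k) x"
  shows "st x * x \<in> tau_dom" "x * st x \<in> tau_dom"
    and "tau (x * st x) = tau (st x * x) / complex_of_real (real n ^ k)"
proof -
  obtain Q Lv where Q: "\<And>j. level_map (Q j) (Lv j + k) (Lv j)" "Q \<longlonglongrightarrow> x"
    using homogeneous_level_seq[OF x] by blast
  have Qadj: "level_map (st (Q j)) (Lv j) (Lv j + k)" for j by (rule level_map_adj[OF Q(1)])
  have dom: "st (Q j) * Q j \<in> tau_dom" "Q j * st (Q j) \<in> tau_dom" for j
    using tau_adj_mult_level_map(1)[OF Q(1)] tau_adj_mult_level_map(1)[OF Qadj] by auto
  have "(\<lambda>j. st (Q j)) \<longlonglongrightarrow> st x" by (rule bounded_linear.tendsto[OF bounded_linear_st Q(2)])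
  hence lim: "(\<lambda>j. st (Q j) * Q j) \<longlonglongrightarrow> st x * x" "(\<lambda>j. Q j * st (Q j)) \<longlonglongrightarrow> x * st x"
    using Q(2) by (auto intro: tendsto_mult)
  show "st x * x \<in> tau_dom" "x * st x \<in> tau_dom"
    using tau_closed(1)[OF dom(1) lim(1)] tau_closed(1)[OF dom(2) lim(2)] .
  have "tau (Q j * st (Q j)) = tau (st (Q j) * Q j) / complex_of_real (real n ^ k)" for j
    using tau_adj_mult_level_map(2)[OF Q(1)] tau_adj_mult_level_map(2)[OF Qadj] hs_norm_adj[OF Q(1)]
    by (simp add: power_add)
  hence "(\<lambda>j. tau (Q j * st (Q j))) \<longlonglongrightarrow> tau (st x * x) / complex_of_real (real n ^ k)"
    using tendsto_divide[OF tau_closed(2)[OF dom(1) lim(1)] tendsto_const, of "complex_of_real (real n ^ k)"] n2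
    by simp
  thus "tau (x * st x) = tau (st x * x) / complex_of_real (real n ^ k)"
    using tau_closed(2)[OF dom(2) lim(2)] LIMSEQ_unique by blast
qed

text \<open>Both \<open>tau\<close>-values are normalised Hilbert--Schmidt norms, and multiplying by the contractions
  \<open>u\<^sup>*\<close> and \<open>v\<close> can only decrease these.\<close>

lemma norm_tau_compression_le:
  assumes Q: "level_map Q (M + k) M"
    and u: "u \<in> wspan (L + k)" "norm u \<le> 1" and v: "v \<in> wspan L" "norm v \<le> 1"
  defines "Z \<equiv> st u * Q * v"
  shows "st Z * Z \<in> tau_dom" "cmod (tau (st Z * Z)) \<le> real n ^ (L + k) * cmod (tau (Q * st Q))"
proof -
  have lQ: "level_map Q (M + L + k) (M + L)" using level_map_shift_le[OF Q, of "M + L"] by simp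
  have lv: "level_map v (M + L) M" using level_map_wspan_elem[OF v(1), of M]
    by (simp add: add.commute)
  have lu: "level_map (st u) M (M + L + k)"
    using level_map_adj_wspan_elem[OF u(1), of M] by (simp add: ac_simps)
  have lQv: "level_map (Q * v) (M + L + k) M" by (rule level_map_mult[OF lQ lv])
  have lZ: "level_map Z M M" unfolding Z_def mult.assoc by (rule level_map_mult[OF lu lQv])
  show "st Z * Z \<in> tau_dom" by (rule tau_adj_mult_level_map(1)[OF lZ])
  have "hs_norm Z M \<le> hs_norm (Q * v) M"
    unfolding Z_def mult.assoc using u(2) by (intro hs_norm_mult_left_le) simp
  also have "\<dots> = hs_norm (st v * st Q) (M + L + k)" using hs_norm_adj[OF lQv] by (simp add: st_mult)
  also have "\<dots> \<le> hs_norm (st Q) (M + L + k)" using v(2) by (intro hs_norm_mult_left_le) simp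
  finally have "hs_norm Z M / real n ^ M \<le> real n ^ (L + k) * (hs_norm (st Q) (M + L + k) / real n ^ (M + L + k))"
    using n2 by (simp add: power_add divide_right_mono field_simps)
  moreover have "cmod (tau (st Z * Z)) = hs_norm Z M / real n ^ M"
    using tau_adj_mult_level_map(2)[OF lZ] hs_norm_nonneg[of Z M]
      by (simp add: norm_divide norm_power)
  moreover have "cmod (tau (Q * st Q)) = hs_norm (st Q) (M + L + k) / real n ^ (M + L + k)"
    using tau_adj_mult_level_map(2)[OF level_map_adj[OF lQ]] hs_norm_nonneg[of "st Q" "M + L + k"]
    by (simp add: norm_divide norm_power)
  ultimately show "cmod (tau (st Z * Z)) \<le> real n ^ (L + k) * cmod (tau (Q * st Q))" by simp
qed

lemma tau_compression_eq_0:
  assumes x: "homogeneous (int k) x" and xx: "tau (x * st x) = 0"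
    and u: "u \<in> wspan (L + k)" "norm u \<le> 1" and v: "v \<in> wspan L" "norm v \<le> 1"
  defines "z \<equiv> st u * x * v"
  shows "st z * z \<in> tau_dom" "tau (st z * z) = 0"
proof -
  obtain Q Lv where Q: "\<And>j. level_map (Q j) (Lv j + k) (Lv j)" "Q \<longlonglongrightarrow> x"
    using homogeneous_level_seq[OF x] by blast
  define Z where "Z j = st u * Q j * v" for j
  note bound = norm_tau_compression_le[OF Q(1) u v, folded Z_def]
  have "(\<lambda>j. st (Q j)) \<longlonglongrightarrow> st x" by (rule bounded_linear.tendsto[OF bounded_linear_st Q(2)])
  hence "(\<lambda>j. tau (Q j * st (Q j))) \<longlonglongrightarrow> tau (x * st x)"
    using Q(2) tau_adj_mult_level_map(1)[OF level_map_adj[OF Q(1)]]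
    by (intro tau_closed(2)) (auto intro: tendsto_mult)
  from tendsto_norm[OF this] have "(\<lambda>j. cmod (tau (Q j * st (Q j)))) \<longlonglongrightarrow> 0" using xx by simp
  hence "(\<lambda>j. real n ^ (L + k) * cmod (tau (Q j * st (Q j)))) \<longlonglongrightarrow> 0"
    using tendsto_mult_left[of _ 0 _ "real n ^ (L + k)"] by simp
  hence "(\<lambda>j. tau (st (Z j) * Z j)) \<longlonglongrightarrow> 0"
    by (rule Lim_null_comparison[OF always_eventually, rotated]) (intro allI bound(2))
  moreover have "Z \<longlonglongrightarrow> z" unfolding Z_def z_def using Q(2) by (intro tendsto_intros)
  hence lim: "(\<lambda>j. st (Z j) * Z j) \<longlonglongrightarrow> st z * z"
    by (intro tendsto_mult bounded_linear.tendsto[OF bounded_linear_st])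
  ultimately show "st z * z \<in> tau_dom" "tau (st z * z) = 0"
    using tau_closed(1)[OF bound(1) lim] LIMSEQ_unique[OF tau_closed(2)[OF bound(1) lim]] by auto
qed

lemma tau_adj_mult_eq_0_far_from_scalar:
  assumes dom: "st z * z \<in> tau_dom" and tz: "tau (st z * z) = 0"
    and c: "c \<ge> 0" and near: "norm (z - sc (complex_of_real c) 1) \<le> e"
  shows "c\<^sup>2 \<le> e\<^sup>2 + 2 * c * e"
proof -
  define d where "d = z - sc (complex_of_real c) 1"
  have "st z * z - sc (complex_of_real (c\<^sup>2)) 1 = st d * d + sc (complex_of_real c) d + sc (complex_of_real c) (st d)"
    unfolding d_def
    by (simp add: st_diff st_sc algebra_simps sc_mult_left sc_mult_right sc_sc power2_eq_square sc_diff_right)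
  hence "norm (st z * z - sc (complex_of_real (c\<^sup>2)) 1) \<le> norm (st d * d) + c * norm d + c * norm d"
    using c norm_triangle_ineq[of "st d * d + sc (complex_of_real c) d" "sc (complex_of_real c) (st d)"]
      norm_triangle_ineq[of "st d * d" "sc (complex_of_real c) d"]
    by (simp add: norm_sc)
  also have "\<dots> \<le> e * e + c * e + c * e"
  proof -
    have nd: "norm d \<le> e" using near unfolding d_def .
    hence e0: "0 \<le> e" by (rule order_trans[OF norm_ge_zero])
    have "norm (st d * d) \<le> e * e"
      using norm_mult_ineq[of "st d" d] mult_mono[OF nd nd e0 norm_ge_zero] by simp
    moreover have "c * norm d \<le> c * e" by (rule mult_left_mono[OF nd c])
    ultimately show ?thesis by linarith
  qed
  finally have "norm (st z * z - sc (complex_of_real (c\<^sup>2)) 1) \<le> e * e + c * e + c * e" .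
  moreover have "cmod (tau (st z * z) - tau (sc (complex_of_real (c\<^sup>2)) 1))
      \<le> norm (st z * z - sc (complex_of_real (c\<^sup>2)) 1)"
    using lipschitz_onD[OF tau_lipschitz dom tau_scalar(1)] by (simp add: dist_norm)
  moreover have "cmod (tau (st z * z) - tau (sc (complex_of_real (c\<^sup>2)) 1)) = c\<^sup>2"
    using tz by (simp add: tau_scalar norm_power)
  ultimately show ?thesis unfolding power2_eq_square by linarith
qed

lemma homogeneous_normal_eq_0:
  assumes k: "k > 0" and x: "homogeneous (int k) x" and normal: "st x * x = x * st x"
  shows "x = 0"
proof (rule ccontr)
  assume "x \<noteq> 0"
  have "tau (x * st x) = tau (x * st x) / complex_of_real (real n ^ k)"
    using tau_adj_homogeneous(3)[OF x] normal by simp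
  hence "tau (x * st x) * (complex_of_real (real n ^ k) - 1) = 0"
    using n2 by (simp add: nonzero_eq_divide_eq algebra_simps)
  moreover have "1 < n ^ k" using n2 k by (intro one_less_power) auto
  ultimately have xx: "tau (x * st x) = 0" by (auto simp flip: of_nat_power)
  define e where "e = norm x / 5"
  have e: "e > 0" unfolding e_def using \<open>x \<noteq> 0\<close> by simp
  obtain q L where q: "level_map q (L + k) L" "norm (x - q) < e"
    using homogeneous_level_approx[OF x e] by blast
  obtain v where v: "v \<in> wspan L" "norm v = 1" "norm q - e \<le> norm (q * v)"
    using level_map_norm_attained[OF q(1) e] by blast
  define c where "c = norm (q * v)"
  have c: "3 * e \<le> c"
    using v(3) q(2) norm_triangle_ineq[of q "x - q"] unfolding c_def e_def by simp
  have qv: "q * v \<in> wspan (L + k)" by (rule level_map_wspan[OF q(1) v(1)])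
  define u where "u = sc (complex_of_real (1 / c)) (q * v)"
  have "norm u = (1 / c) * c" unfolding u_def c_def by (simp add: norm_sc norm_divide)
  hence u: "u \<in> wspan (L + k)" "norm u = 1" unfolding u_def using c e
    by (auto simp: wspan_sc[OF qv])
  have "st u * q * v = sc (complex_of_real (1 / c)) (sc (complex_of_real (c\<^sup>2)) 1)"
    unfolding u_def c_def by (simp add: st_sc sc_mult_left mult.assoc adj_mult_self_wspan[OF qv])
  hence "st u * x * v - sc (complex_of_real c) 1 = st u * (x - q) * v"
    using c e by (simp add: algebra_simps sc_sc power2_eq_square)
  hence "norm (st u * x * v - sc (complex_of_real c) 1) \<le> e"
    using norm_mult3_le[of "st u" "x - q" v] u v q(2) by simp
  hence "c\<^sup>2 \<le> e\<^sup>2 + 2 * c * e"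
    using tau_compression_eq_0[OF x xx u(1) _ v(1)] u v c e
    by (intro tau_adj_mult_eq_0_far_from_scalar) auto
  moreover have "3 * e * e \<le> c * (c - 2 * e)" using c e by (intro mult_mono) auto
  moreover have "0 < e * e" using e by simp
  ultimately show False by (simp add: power2_eq_square right_diff_distrib)
qed

end

theorem lemma4p1:
  fixes sc :: "complex \<Rightarrow> 'a::{real_normed_algebra_1,banach} \<Rightarrow> 'a"
    and st :: "'a \<Rightarrow> 'a" and s :: "nat \<Rightarrow> 'a" and n :: nat
    and \<omega> :: "complex \<Rightarrow> 'a \<Rightarrow> 'a" and k :: int and x :: 'a
  assumes cstar: "cstar_algebra sc st"
    and n2: "n \<ge> 2"
    and isom: "\<forall>i<n. st (s i) * s i = 1"
    and cuntz: "(\<Sum>i<n. s i * st (s i)) = 1"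
    and gen: "cstar_gen sc st (s ` {..<n}) = UNIV"
    and gauge: "\<forall>t. cmod t = 1 \<longrightarrow> star_hom sc st (\<omega> t) \<and> bij (\<omega> t) \<and>
                    (\<forall>i<n. \<omega> t (s i) = sc t (s i))"
    and k: "k \<noteq> 0"
    and spec: "\<forall>t. cmod t = 1 \<longrightarrow> \<omega> t x = sc (t powi k) x"
    and normal: "st x * x = x * st x"
  shows "x = 0"
proof -
  interpret cuntz_gauge sc st s n \<omega>
    using cstar n2 isom cuntz gen gauge by unfold_locales auto
  have x: "homogeneous k x" using spec unfolding homogeneous_def by blast
  show ?thesis
  proof (cases "k > 0")
    case True
    thus ?thesis using homogeneous_normal_eq_0[of "nat k" x] x normal by simp
  next
    case False
    hence "homogeneous (int (nat (- k))) (st x)" using homogeneous_adj[OF x] k by simp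
    hence "st x = 0" using homogeneous_normal_eq_0[of "nat (- k)" "st x"] False k normal by simp
    thus ?thesis by (metis st_st st_zero)
  qed
qed

end
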